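(* Let $H$ be a complex Hilbert space, $A\in B(H)$ a nonzero positive semidefinite operator, $P$ the orthogonal projection onto $\overline{R(A)}$, and $T\in B_{A^{1/2}}(H)$. Let $T_{eff}\in B(\overline{R(A)})$ be defined by $T_{eff}x=PTPx$ for $x\in\overline{R(A)}$, and let $r(T_{eff})$ denote its (usual) spectral radius. Then $$r(T_{eff})=r_A(T^{\diamond})\le\sup\{|\lambda| : \lambda\in\sigma_A(T)\}.$$
   Context: $\|x\|_A=\langle Ax,x\rangle^{1/2}$. For $S\in B(H)$, $\|S\|_A=\sup\{\|Sx\|_A : x\in\overline{R(A)},\ \|x\|_A=1\}$. $B_{A^{1/2}}(H)=\{S\in B(H): R(S^*A^{1/2})\subset R(A^{1/2})\}$. For $S\in B_{A^{1/2}}(H)$, $S^{\diamond}$ is the unique operator in $B(H)$ with $S^*A^{1/2}=A^{1/2}S^{\diamond}$ and $R(S^{\diamond})\subset\overline{R(A^{1/2})}$; $S^\diamond\in B_{A^{1/2}}(H)$. $r_A(S)=\lim_{n\to\infty}\|S^n\|_A^{1/n}$. $S\in B_{A^{1/2}}(H)$ is $A$-invertible in $B_{A^{1/2}}(H)$ if there is a nonzero $R\in B_{A^{1/2}}(H)$ with $ASR=ARS=A$; $\rho_A(S)=\{\lambda:\lambda I-S$ is $A$-invertible in $B_{A^{1/2}}(H)\}$, $\sigma_A(S)=\mathbb C\setminus\rho_A(S)$. *)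

theory Defs
  imports "HOL-Analysis.Analysis"
begin

text \<open>HOL-Analysis has no complex inner product spaces, so we introduce them as a
  type class: a real normed vector space with a compatible complex scalar
  multiplication and a complex inner product (linear in the first argument,
  conjugate linear in the second) inducing the norm.\<close>

class complex_inner = real_normed_vector +
  fixes scaleC :: "complex \<Rightarrow> 'a \<Rightarrow> 'a"
    and cinner :: "'a \<Rightarrow> 'a \<Rightarrow> complex"
  assumes scaleC_add_right: "scaleC a (x + y) = scaleC a x + scaleC a y"
    and scaleC_add_left: "scaleC (a + b) x = scaleC a x + scaleC b x"
    and scaleC_scaleC: "scaleC a (scaleC b x) = scaleC (a * b) x"
    and scaleC_one: "scaleC 1 x = x"
    and scaleR_scaleC: "scaleR r x = scaleC (complex_of_real r) x"
    and cinner_commute: "cinner x y = cnj (cinner y x)"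
    and cinner_add_left: "cinner (x + y) z = cinner x z + cinner y z"
    and cinner_scaleC_left: "cinner (scaleC a x) y = a * cinner x y"
    and cinner_self_nonneg: "Im (cinner x x) = 0 \<and> 0 \<le> Re (cinner x x)"
    and cinner_self_eq_zero: "cinner x x = 0 \<longleftrightarrow> x = 0"
    and norm_eq_sqrt_cinner: "norm x = sqrt (Re (cinner x x))"

class chilbert_space = complex_inner + complete_space

definition clinear :: "('a::complex_inner \<Rightarrow> 'b::complex_inner) \<Rightarrow> bool" where
  "clinear f \<longleftrightarrow> (\<forall>x y. f (x + y) = f x + f y) \<and> (\<forall>a x. f (scaleC a x) = scaleC a (f x))"

definition bounded_clinear :: "('a::complex_inner \<Rightarrow> 'b::complex_inner) \<Rightarrow> bool" where
  "bounded_clinear f \<longleftrightarrow> clinear f \<and> (\<exists>K. \<forall>x. norm (f x) \<le> norm x * K)"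

definition adjoint :: "('a::complex_inner \<Rightarrow> 'a) \<Rightarrow> ('a \<Rightarrow> 'a)" where
  "adjoint S = (THE R. \<forall>x y. cinner (S x) y = cinner x (R y))"

definition positive_op :: "('a::complex_inner \<Rightarrow> 'a) \<Rightarrow> bool" where
  "positive_op A \<longleftrightarrow> bounded_clinear A \<and>
     (\<forall>x. Im (cinner (A x) x) = 0 \<and> 0 \<le> Re (cinner (A x) x))"

definition sqrt_op :: "('a::complex_inner \<Rightarrow> 'a) \<Rightarrow> ('a \<Rightarrow> 'a)" where
  "sqrt_op A = (THE S. positive_op S \<and> S \<circ> S = A)"

definition orth_proj :: "'a::complex_inner set \<Rightarrow> 'a \<Rightarrow> 'a" where
  "orth_proj M x = (THE m. m \<in> M \<and> (\<forall>y\<in>M. cinner (x - m) y = 0))"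

definition normA :: "('a::complex_inner \<Rightarrow> 'a) \<Rightarrow> 'a \<Rightarrow> real" where
  "normA A x = sqrt (Re (cinner (A x) x))"

definition opnormA :: "('a::complex_inner \<Rightarrow> 'a) \<Rightarrow> ('a \<Rightarrow> 'a) \<Rightarrow> real" where
  "opnormA A S = Sup {normA A (S x) | x. x \<in> closure (range A) \<and> normA A x = 1}"

definition BAhalf :: "('a::complex_inner \<Rightarrow> 'a) \<Rightarrow> ('a \<Rightarrow> 'a) set" where
  "BAhalf A = {S. bounded_clinear S \<and> range (adjoint S \<circ> sqrt_op A) \<subseteq> range (sqrt_op A)}"

definition diamond :: "('a::complex_inner \<Rightarrow> 'a) \<Rightarrow> ('a \<Rightarrow> 'a) \<Rightarrow> ('a \<Rightarrow> 'a)" where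
  "diamond A S = (THE R. bounded_clinear R \<and> adjoint S \<circ> sqrt_op A = sqrt_op A \<circ> R
       \<and> range R \<subseteq> closure (range (sqrt_op A)))"

definition spec_radA :: "('a::complex_inner \<Rightarrow> 'a) \<Rightarrow> ('a \<Rightarrow> 'a) \<Rightarrow> real" where
  "spec_radA A S = lim (\<lambda>n. opnormA A (S ^^ n) powr (1 / real n))"

definition A_invertible :: "('a::complex_inner \<Rightarrow> 'a) \<Rightarrow> ('a \<Rightarrow> 'a) \<Rightarrow> bool" where
  "A_invertible A S \<longleftrightarrow> (\<exists>R\<in>BAhalf A. R \<noteq> (\<lambda>x. 0) \<and> A \<circ> S \<circ> R = A \<and> A \<circ> R \<circ> S = A)"

definition spectrumA :: "('a::complex_inner \<Rightarrow> 'a) \<Rightarrow> ('a \<Rightarrow> 'a) \<Rightarrow> complex set" where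
  "spectrumA A S = {l. \<not> A_invertible A (\<lambda>x. scaleC l x - S x)}"

text \<open>An operator \<open>T\<close> on the closed subspace \<open>M\<close> (only its values on \<open>M\<close> matter)
  is invertible in \<open>B(M)\<close> if it has a bounded linear two-sided inverse on \<open>M\<close>.\<close>
definition invertible_on :: "'a::complex_inner set \<Rightarrow> ('a \<Rightarrow> 'a) \<Rightarrow> bool" where
  "invertible_on M T \<longleftrightarrow> (\<exists>R. R ` M \<subseteq> M
      \<and> (\<forall>x\<in>M. \<forall>y\<in>M. R (x + y) = R x + R y)
      \<and> (\<forall>a. \<forall>x\<in>M. R (scaleC a x) = scaleC a (R x))
      \<and> (\<exists>K. \<forall>x\<in>M. norm (R x) \<le> norm x * K)
      \<and> (\<forall>x\<in>M. R (T x) = x \<and> T (R x) = x))"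

definition spectrum_on :: "'a::complex_inner set \<Rightarrow> ('a \<Rightarrow> 'a) \<Rightarrow> complex set" where
  "spectrum_on M T = {l. \<not> invertible_on M (\<lambda>x. scaleC l x - T x)}"

definition spec_rad_on :: "'a::complex_inner set \<Rightarrow> ('a \<Rightarrow> 'a) \<Rightarrow> real" where
  "spec_rad_on M T = Sup (cmod ` spectrum_on M T)"

end

theory Submission
  imports Defs "HOL-Complex_Analysis.Complex_Analysis"
begin

text \<open>Let \<open>M\<close> be the closure of the range of \<open>A\<close>, \<open>P\<close> the projection onto \<open>M\<close>, \<open>S = A\<^bsup>1/2\<^esup>\<close>
  and \<open>T_eff = P T P\<close>.  Then \<open>\<parallel>x\<parallel>\<^sub>A = \<parallel>S x\<parallel>\<close>, and \<open>T\<^sup>\<diamond>\<close> is the unique operator into \<open>M\<close> with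
  \<open>S T\<^sup>\<diamond> = T\<^sup>* S\<close>.  Since \<open>S\<close> maps \<open>M\<close> onto a dense subspace of \<open>M\<close>, the \<open>A\<close>-norm of
  \<open>(T\<^sup>\<diamond>)\<^sup>n\<close> equals the norm of \<open>(T\<^sup>*)\<^sup>n\<close> on \<open>M\<close>, the adjoint of \<open>T_eff\<^sup>n\<close> on \<open>M\<close>; here one
  uses that \<open>T\<close> maps the kernel of \<open>A\<close> into itself, so that \<open>(P T P)\<^sup>n = P T\<^sup>n P\<close>.  Hence
  \<open>\<parallel>(T\<^sup>\<diamond>)\<^sup>n\<parallel>\<^sub>A = \<parallel>T_eff\<^sup>n\<parallel>\<close> for all \<open>n\<close>, and Gelfand's formula for \<open>T_eff\<close> gives
  \<open>r\<^sub>A(T\<^sup>\<diamond>) = r(T_eff)\<close>.  For the inequality, an \<open>A\<close>-inverse \<open>R\<close> of \<open>\<lambda> - T\<close> compresses to the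
  inverse \<open>P R\<close> of \<open>\<lambda> - T_eff\<close> on \<open>M\<close>, so \<open>\<sigma>(T_eff) \<subseteq> \<sigma>\<^sub>A(T)\<close>.\<close>

section \<open>Complex inner product spaces\<close>

context complex_inner
begin

lemma scaleC_zero_right [simp]: "scaleC a 0 = 0"
  using scaleC_add_right[of a 0 0] by simp

lemma scaleC_zero_left [simp]: "scaleC 0 x = 0"
  using scaleC_add_left[of 0 0 x] by simp

lemma scaleC_minus_right: "scaleC a (- x) = - scaleC a x"
  using add.inverse_unique[of "scaleC a x" "scaleC a (-x)"] scaleC_add_right[of a x "-x"] by simp

lemma scaleC_diff_right: "scaleC a (x - y) = scaleC a x - scaleC a y"
  using scaleC_add_right[of a x "-y"] by (simp add: scaleC_minus_right)

lemma scaleC_minus_left: "scaleC (- a) x = - scaleC a x"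
  using add.inverse_unique[of "scaleC a x" "scaleC (-a) x"] scaleC_add_left[of a "-a" x] by simp

lemma scaleC_diff_left: "scaleC (a - b) x = scaleC a x - scaleC b x"
  using scaleC_add_left[of a "-b" x] by (simp add: scaleC_minus_left)

lemma scaleC_minus_one: "scaleC (-1) x = - x"
  by (simp add: scaleC_minus_left scaleC_one)

lemma cinner_add_right: "cinner x (y + z) = cinner x y + cinner x z"
  by (metis cinner_commute cinner_add_left complex_cnj_add)

lemma cinner_scaleC_right: "cinner x (scaleC a y) = cnj a * cinner x y"
  by (metis cinner_commute cinner_scaleC_left complex_cnj_mult)

lemma cinner_minus_left: "cinner (- x) y = - cinner x y"
  using cinner_scaleC_left[of "-1" x y] by (simp add: scaleC_minus_one)

lemma cinner_minus_right: "cinner x (- y) = - cinner x y"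
  using cinner_scaleC_right[of x "-1" y] by (simp add: scaleC_minus_one)

lemma cinner_zero_left [simp]: "cinner 0 y = 0"
  using cinner_minus_left[of 0 y] by simp

lemma cinner_zero_right [simp]: "cinner x 0 = 0"
  using cinner_minus_right[of x 0] by simp

lemma cinner_diff_left: "cinner (x - y) z = cinner x z - cinner y z"
  using cinner_add_left[of x "-y" z] by (simp add: cinner_minus_left)

lemma cinner_diff_right: "cinner x (y - z) = cinner x y - cinner x z"
  using cinner_add_right[of x y "-z"] by (simp add: cinner_minus_right)

lemma cinner_self: "cinner x x = complex_of_real ((norm x)\<^sup>2)"
  using cinner_self_nonneg[of x] norm_eq_sqrt_cinner[of x] by (simp add: complex_eq_iff)

lemma norm_sq_cinner: "(norm x)\<^sup>2 = Re (cinner x x)"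
  using cinner_self[of x] by simp

lemma norm_scaleC [simp]: "norm (scaleC a x) = cmod a * norm x"
proof -
  have "(norm (scaleC a x))\<^sup>2 = Re (a * cnj a * cinner x x)"
    by (simp only: norm_sq_cinner cinner_scaleC_left cinner_scaleC_right mult.assoc mult.left_commute)
  also have "\<dots> = (cmod a * norm x)\<^sup>2"
    by (simp add: cinner_self complex_mult_cnj cmod_power2 power_mult_distrib del: of_real_power)
  finally show ?thesis
    by (simp add: power2_eq_iff_nonneg)
qed

lemma cinner_ext_right: "(\<And>y. cinner y x = cinner y x') \<Longrightarrow> x = x'"
  using cinner_self_eq_zero[of "x - x'"] by (simp add: cinner_diff_right)

lemma norm_add_sq: "(norm (x + y))\<^sup>2 = (norm x)\<^sup>2 + (norm y)\<^sup>2 + 2 * Re (cinner x y)"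
proof -
  have "cinner (x+y) (x+y) = cinner x x + cinner y y + (cinner x y + cnj (cinner x y))"
    by (simp add: cinner_add_left cinner_add_right cinner_commute[of y x])
  then show ?thesis by (simp add: norm_sq_cinner)
qed

lemma parallelogram_law: "(norm (x + y))\<^sup>2 + (norm (x - y))\<^sup>2 = 2 * (norm x)\<^sup>2 + 2 * (norm y)\<^sup>2"
  using norm_add_sq[of x y] norm_add_sq[of x "-y"] by (simp add: cinner_minus_right)

end

declare scaleC_one [simp]

section \<open>Bounded complex-linear operators\<close>

lemma clinearI: "(\<And>x y. f (x + y) = f x + f y) \<Longrightarrow> (\<And>a x. f (scaleC a x) = scaleC a (f x)) \<Longrightarrow> clinear f"
  by (simp add: clinear_def)

lemma clinear_add: "clinear f \<Longrightarrow> f (x + y) = f x + f y"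
  by (simp add: clinear_def)

lemma clinear_scaleC: "clinear f \<Longrightarrow> f (scaleC a x) = scaleC a (f x)"
  by (simp add: clinear_def)

lemma clinear_zero: "clinear f \<Longrightarrow> f 0 = 0"
  using clinear_scaleC[of f 0 0] by simp

lemma clinear_diff: "clinear f \<Longrightarrow> f (x - y) = f x - f y"
  using clinear_add[of f x "-y"] clinear_scaleC[of f "-1" y] by (simp add: scaleC_minus_one)

lemma clinear_linear: "clinear f \<Longrightarrow> linear f"
  by (rule linearI) (auto simp: clinear_add clinear_scaleC scaleR_scaleC)

lemma clinear_id: "clinear (\<lambda>x. x)"
  by (simp add: clinear_def)

lemma bounded_clinear_clinear: "bounded_clinear f \<Longrightarrow> clinear f"
  by (simp add: bounded_clinear_def)

lemma bounded_clinear_bound: "bounded_clinear f \<Longrightarrow> \<exists>K>0. \<forall>x. norm (f x) \<le> norm x * K"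
proof -
  assume "bounded_clinear f"
  then obtain K where K: "\<forall>x. norm (f x) \<le> norm x * K" by (auto simp: bounded_clinear_def)
  have "\<forall>x. norm (f x) \<le> norm x * (max K 1)"
    using K by (metis max.cobounded1 mult_left_mono norm_ge_zero order_trans)
  then show ?thesis by (intro exI[of _ "max K 1"]) auto
qed

lemma bounded_clinearI: "clinear f \<Longrightarrow> (\<And>x. norm (f x) \<le> norm x * K) \<Longrightarrow> bounded_clinear f"
  by (auto simp: bounded_clinear_def)

lemma bounded_clinear_linear: "bounded_clinear f \<Longrightarrow> bounded_linear f"
  unfolding bounded_linear_def bounded_linear_axioms_def
  by (auto simp: bounded_clinear_def clinear_linear)

lemmas bounded_clinear_add = clinear_add[OF bounded_clinear_clinear]
lemmas bounded_clinear_scaleC = clinear_scaleC[OF bounded_clinear_clinear]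
lemmas bounded_clinear_zero = clinear_zero[OF bounded_clinear_clinear]
lemmas bounded_clinear_diff = clinear_diff[OF bounded_clinear_clinear]

lemma bounded_clinear_tendsto: "bounded_clinear f \<Longrightarrow> (g \<longlongrightarrow> l) F \<Longrightarrow> ((\<lambda>x. f (g x)) \<longlongrightarrow> f l) F"
  using bounded_linear.tendsto[OF bounded_clinear_linear] by blast

lemma bounded_clinear_id: "bounded_clinear (\<lambda>x. x)"
  by (intro bounded_clinearI[where K=1] clinear_id) auto

lemma bounded_clinear_compose:
  assumes f: "bounded_clinear f" and g: "bounded_clinear g"
  shows "bounded_clinear (\<lambda>x. f (g x))"
proof -
  obtain Kf where Kf: "\<forall>x. norm (f x) \<le> norm x * Kf" "Kf > 0" using bounded_clinear_bound[OF f] by auto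
  obtain Kg where Kg: "\<forall>x. norm (g x) \<le> norm x * Kg" "Kg > 0" using bounded_clinear_bound[OF g] by auto
  show ?thesis
  proof (rule bounded_clinearI[where K="Kg*Kf"])
    show "clinear (\<lambda>x. f (g x))"
      using f g by (intro clinearI) (auto simp: bounded_clinear_add bounded_clinear_scaleC)
    fix x
    have "norm (f (g x)) \<le> norm (g x) * Kf" using Kf by auto
    also have "\<dots> \<le> norm x * Kg * Kf" using Kg Kf by (intro mult_right_mono) auto
    finally show "norm (f (g x)) \<le> norm x * (Kg * Kf)" by (simp add: mult.assoc)
  qed
qed

lemma bounded_clinear_funpow:
  fixes f :: "'a::complex_inner \<Rightarrow> 'a"
  shows "bounded_clinear f \<Longrightarrow> bounded_clinear (f ^^ n)"
  by (induct n) (simp_all add: bounded_clinear_id bounded_clinear_compose id_def comp_def)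

lemma bounded_clinear_plus:
  assumes f: "bounded_clinear f" and g: "bounded_clinear g"
  shows "bounded_clinear (\<lambda>x. f x + g x)"
proof -
  obtain Kf where Kf: "\<forall>x. norm (f x) \<le> norm x * Kf" using bounded_clinear_bound[OF f] by auto
  obtain Kg where Kg: "\<forall>x. norm (g x) \<le> norm x * Kg" using bounded_clinear_bound[OF g] by auto
  show ?thesis
  proof (rule bounded_clinearI[where K="Kf+Kg"])
    show "clinear (\<lambda>x. f x + g x)"
      using f g by (intro clinearI) (auto simp: bounded_clinear_add bounded_clinear_scaleC scaleC_add_right)
    fix x
    have "norm (f x + g x) \<le> norm (f x) + norm (g x)" by (rule norm_triangle_ineq)
    also have "\<dots> \<le> norm x * Kf + norm x * Kg" using Kf Kg by (intro add_mono) auto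
    finally show "norm (f x + g x) \<le> norm x * (Kf + Kg)" by (simp add: distrib_left)
  qed
qed

lemma bounded_clinear_scaleC_comp:
  assumes f: "bounded_clinear f"
  shows "bounded_clinear (\<lambda>x. scaleC c (f x))"
proof -
  obtain Kf where Kf: "\<forall>x. norm (f x) \<le> norm x * Kf" using bounded_clinear_bound[OF f] by auto
  show ?thesis
  proof (rule bounded_clinearI[where K="cmod c * Kf"])
    show "clinear (\<lambda>x. scaleC c (f x))"
      using f by (intro clinearI)
        (auto simp: bounded_clinear_add bounded_clinear_scaleC scaleC_add_right scaleC_scaleC mult.commute)
    fix x
    show "norm (scaleC c (f x)) \<le> norm x * (cmod c * Kf)"
      using Kf mult_left_mono[of "norm (f x)" "norm x * Kf" "cmod c"] by (simp add: mult_ac)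
  qed
qed

lemma bounded_clinear_sub:
  "bounded_clinear f \<Longrightarrow> bounded_clinear g \<Longrightarrow> bounded_clinear (\<lambda>x. f x - g x)"
  using bounded_clinear_plus[OF _ bounded_clinear_scaleC_comp, of f g "-1"]
  by (simp add: scaleC_minus_one)

lemma bounded_bilinear_scaleC: "bounded_bilinear (\<lambda>a (x::'a::complex_inner). scaleC a x)"
proof (rule bounded_bilinear.intro)
  show "scaleC (r *\<^sub>R a) b = r *\<^sub>R scaleC a b" "scaleC a (r *\<^sub>R b) = r *\<^sub>R scaleC a b"
    for r a and b :: 'a
    by (simp_all add: scaleR_scaleC scaleC_scaleC scaleR_conv_of_real mult.commute)
  show "\<exists>K. \<forall>a b. norm (scaleC a (b::'a)) \<le> norm a * norm b * K"
    by (intro exI[of _ 1]) simp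
qed (simp_all add: scaleC_add_left scaleC_add_right)

lemmas tendsto_scaleC [tendsto_intros] = bounded_bilinear.tendsto[OF bounded_bilinear_scaleC]

section \<open>Nonnegative forms and the Cauchy--Schwarz inequality\<close>

definition nonneg_form :: "('a::complex_inner \<Rightarrow> 'a) \<Rightarrow> bool" where
  "nonneg_form S \<longleftrightarrow> (\<forall>x. Im (cinner (S x) x) = 0 \<and> 0 \<le> Re (cinner (S x) x))"

lemma positive_op_nonneg_form: "positive_op S \<Longrightarrow> nonneg_form S"
  by (simp add: positive_op_def nonneg_form_def)

lemma positive_op_bcl: "positive_op S \<Longrightarrow> bounded_clinear S"
  by (simp add: positive_op_def)

lemma nonneg_form_selfadj:
  assumes S: "clinear S" and nn: "nonneg_form S"
  shows "cinner (S x) y = cinner x (S y)"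
proof -
  define h where "h x y = cinner (S x) y - cinner x (S y)" for x y
  have hxx: "h x x = 0" for x
    using nn cinner_commute[of x "S x"] by (simp add: h_def nonneg_form_def complex_eq_iff)
  have "h (u + v) (u + v) = h u u + h u v + h v u + h v v" for u v
    by (simp add: h_def clinear_add[OF S] cinner_add_left cinner_add_right algebra_simps)
  then have 1: "h x y + h y x = 0" using hxx by simp
  have "h (u + scaleC \<i> v) (u + scaleC \<i> v) = h u u - \<i> * h u v + \<i> * h v u + h v v" for u v
    by (simp add: h_def clinear_add[OF S] clinear_scaleC[OF S] cinner_add_left cinner_add_right
        cinner_scaleC_left cinner_scaleC_right algebra_simps)
  then have 2: "- \<i> * h x y + \<i> * h y x = 0" using hxx by simp
  from 1 2 have "(-2 * \<i>) * h x y = 0" by (simp add: add_eq_0_iff algebra_simps)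
  then show ?thesis by (simp add: h_def)
qed

lemma cmod_sq_le_of_quadratic_nonneg:
  fixes a c :: real and b :: complex
  assumes H: "\<And>t. 0 \<le> a + 2 * Re (cnj t * b) + (cmod t)\<^sup>2 * c" and c: "0 \<le> c"
  shows "(cmod b)\<^sup>2 \<le> a * c"
proof (cases "c = 0")
  case True
  show ?thesis
  proof (rule ccontr)
    assume "\<not> ?thesis"
    then have b0: "0 < (cmod b)\<^sup>2" using True by auto
    define r where "r = (a + 1) / (2 * (cmod b)\<^sup>2)"
    have "Re (cnj (- of_real r * b) * b) = - r * (cmod b)\<^sup>2"
      using cmod_power2[of b] by (simp add: power2_eq_square algebra_simps)
    then have "0 \<le> a - 2 * r * (cmod b)\<^sup>2" using H[of "- of_real r * b"] True by simp
    also have "2 * r * (cmod b)\<^sup>2 = a + 1" using b0 by (simp add: r_def)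
    finally show False by simp
  qed
next
  case False
  then have cpos: "c > 0" using c by simp
  define t where "t = - b / of_real c"
  have "Re (cnj t * b) = - (cmod b)\<^sup>2 / c"
    using cmod_power2[of b] cpos by (simp add: t_def power2_eq_square field_simps)
  moreover have "(cmod t)\<^sup>2 * c = (cmod b)\<^sup>2 / c"
    using cpos by (simp add: t_def norm_divide power2_eq_square)
  ultimately have "(cmod b)\<^sup>2 / c \<le> a" using H[of t] by simp
  then show ?thesis using cpos by (simp add: divide_le_eq mult.commute)
qed

lemma nonneg_form_cauchy_schwarz:
  assumes S: "clinear S" and nn: "nonneg_form S"
  shows "(cmod (cinner (S x) y))\<^sup>2 \<le> Re (cinner (S x) x) * Re (cinner (S y) y)"
proof (rule cmod_sq_le_of_quadratic_nonneg)
  show "0 \<le> Re (cinner (S y) y)" using nn by (simp add: nonneg_form_def)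
  fix t
  have sa: "cinner (S y) x = cnj (cinner (S x) y)"
    using nonneg_form_selfadj[OF S nn, of y x] cinner_commute[of y "S x"] by simp
  have "cinner (S (x + scaleC t y)) (x + scaleC t y)
      = cinner (S x) x + cnj t * cinner (S x) y + t * cinner (S y) x + t * cnj t * cinner (S y) y"
    by (simp add: clinear_add[OF S] clinear_scaleC[OF S] cinner_add_left cinner_add_right
        cinner_scaleC_left cinner_scaleC_right algebra_simps)
  also have "\<dots> = cinner (S x) x + (cnj t * cinner (S x) y + cnj (cnj t * cinner (S x) y))
       + of_real ((cmod t)\<^sup>2) * cinner (S y) y"
    using complex_norm_square[of t] by (simp add: sa mult.commute)
  finally have "Re (cinner (S (x + scaleC t y)) (x + scaleC t y))
     = Re (cinner (S x) x) + 2 * Re (cnj t * cinner (S x) y) + (cmod t)\<^sup>2 * Re (cinner (S y) y)"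
    by simp
  moreover have "0 \<le> Re (cinner (S (x + scaleC t y)) (x + scaleC t y))"
    using nn by (simp add: nonneg_form_def)
  ultimately show "0 \<le> Re (cinner (S x) x) + 2 * Re (cnj t * cinner (S x) y) + (cmod t)\<^sup>2 * Re (cinner (S y) y)"
    by simp
qed

lemma le_of_mult_self_le:
  fixes a c :: real
  assumes "0 \<le> c" "a * a \<le> c * a"
  shows "a \<le> c"
  using assms by (cases "a \<le> 0") (auto simp: mult_le_cancel_right)

lemma norm_cinner_le: "cmod (cinner x y) \<le> norm x * norm y"
proof -
  have "nonneg_form (\<lambda>x::'a. x)" by (simp add: nonneg_form_def cinner_self)
  then have "(cmod (cinner x y))\<^sup>2 \<le> (norm x * norm y)\<^sup>2"
    using nonneg_form_cauchy_schwarz[OF clinear_id, of x y] by (simp add: norm_sq_cinner power_mult_distrib)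
  then show ?thesis by (rule power2_le_imp_le) simp
qed

lemma nonneg_form_eq_0:
  assumes S: "clinear S" and nn: "nonneg_form S" and z: "Re (cinner (S x) x) = 0"
  shows "S x = 0"
  using nonneg_form_cauchy_schwarz[OF S nn, of x "S x"] z by (simp add: cinner_self_eq_zero)

lemma bounded_bilinear_cinner: "bounded_bilinear (cinner :: 'a::complex_inner \<Rightarrow> 'a \<Rightarrow> complex)"
  by (rule bounded_bilinear.intro)
     (auto simp: cinner_add_left cinner_add_right scaleR_scaleC cinner_scaleC_left cinner_scaleC_right
        scaleR_conv_of_real norm_cinner_le intro: exI[of _ 1])

lemmas tendsto_cinner [tendsto_intros] = bounded_bilinear.tendsto[OF bounded_bilinear_cinner]
lemmas bounded_linear_cinner_left = bounded_bilinear.bounded_linear_left[OF bounded_bilinear_cinner]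
lemmas bounded_linear_cinner_right = bounded_bilinear.bounded_linear_right[OF bounded_bilinear_cinner]
section \<open>The projection theorem\<close>

definition csubspace :: "'a::complex_inner set \<Rightarrow> bool" where
  "csubspace M \<longleftrightarrow> 0 \<in> M \<and> (\<forall>x\<in>M. \<forall>y\<in>M. x + y \<in> M) \<and> (\<forall>a. \<forall>x\<in>M. scaleC a x \<in> M)"

lemma csubspace_0: "csubspace M \<Longrightarrow> 0 \<in> M"
  and csubspace_add: "csubspace M \<Longrightarrow> x \<in> M \<Longrightarrow> y \<in> M \<Longrightarrow> x + y \<in> M"
  and csubspace_scaleC: "csubspace M \<Longrightarrow> x \<in> M \<Longrightarrow> scaleC a x \<in> M"
  by (auto simp: csubspace_def)

lemma csubspace_minus: "csubspace M \<Longrightarrow> x \<in> M \<Longrightarrow> - x \<in> M"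
  using csubspace_scaleC[of M x "-1"] by (simp add: scaleC_minus_one)

lemma csubspace_diff: "csubspace M \<Longrightarrow> x \<in> M \<Longrightarrow> y \<in> M \<Longrightarrow> x - y \<in> M"
  using csubspace_add[of M x "-y"] csubspace_minus[of M y] by simp

lemma csubspace_scaleR: "csubspace M \<Longrightarrow> x \<in> M \<Longrightarrow> scaleR r x \<in> M"
  by (simp add: scaleR_scaleC csubspace_scaleC)

lemma csubspace_sum: "csubspace M \<Longrightarrow> (\<And>i. i \<in> S \<Longrightarrow> f i \<in> M) \<Longrightarrow> sum f S \<in> M"
  by (induct S rule: infinite_finite_induct) (auto simp: csubspace_0 csubspace_add)

lemma csubspace_closure:
  assumes X: "csubspace X"
  shows "csubspace (closure X)"
  unfolding csubspace_def
proof (intro conjI ballI allI)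
  show "0 \<in> closure X" using csubspace_0[OF X] closure_subset by blast
  fix x y assume x: "x \<in> closure X" and y: "y \<in> closure X"
  obtain f where f: "\<forall>n. f n \<in> X" "f \<longlonglongrightarrow> x" using closure_sequential[THEN iffD1, OF x] by blast
  obtain g where g: "\<forall>n. g n \<in> X" "g \<longlonglongrightarrow> y" using closure_sequential[THEN iffD1, OF y] by blast
  have "(\<lambda>n. f n + g n) \<longlonglongrightarrow> x + y" by (intro tendsto_add f g)
  moreover have "\<forall>n. f n + g n \<in> X" using f g X by (simp add: csubspace_add)
  ultimately show "x + y \<in> closure X" by (intro closure_sequential[THEN iffD2] exI conjI)
next
  fix a x assume x: "x \<in> closure X"
  obtain f where f: "\<forall>n. f n \<in> X" "f \<longlonglongrightarrow> x" using closure_sequential[THEN iffD1, OF x] by blast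
  have "(\<lambda>n. scaleC a (f n)) \<longlonglongrightarrow> scaleC a x" by (intro tendsto_scaleC tendsto_const f)
  moreover have "\<forall>n. scaleC a (f n) \<in> X" using f X by (simp add: csubspace_scaleC)
  ultimately show "scaleC a x \<in> closure X" by (intro closure_sequential[THEN iffD2] exI conjI)
qed

lemma csubspace_range:
  assumes f: "clinear f"
  shows "csubspace (range f)"
  unfolding csubspace_def
proof (intro conjI ballI allI)
  show "0 \<in> range f" using clinear_zero[OF f] by (metis rangeI)
  fix x y assume "x \<in> range f" "y \<in> range f"
  then obtain u v where "x = f u" "y = f v" by blast
  then show "x + y \<in> range f" using clinear_add[OF f, of u v] by (metis rangeI)
next
  fix a x assume "x \<in> range f"
  then obtain u where "x = f u" by blast
  then show "scaleC a x \<in> range f" using clinear_scaleC[OF f, of a u] by (metis rangeI)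
qed

lemma norm_diff_sq_le_of_midpoint:
  fixes x a b :: "'a::complex_inner"
  assumes "d \<le> norm (x - scaleR (1/2) (a + b))" "0 \<le> d"
  shows "(norm (a - b))\<^sup>2 \<le> 2 * (norm (x - a))\<^sup>2 + 2 * (norm (x - b))\<^sup>2 - 4 * d\<^sup>2"
proof -
  have "(x - a) + (x - b) = scaleR 2 (x - scaleR (1/2) (a + b))" by (simp add: algebra_simps scaleR_2)
  then have "(norm ((x - a) + (x - b)))\<^sup>2 = 4 * (norm (x - scaleR (1/2) (a + b)))\<^sup>2"
    by (simp add: power2_eq_square)
  moreover have "d\<^sup>2 \<le> (norm (x - scaleR (1/2) (a + b)))\<^sup>2" using assms by (intro power_mono) auto
  ultimately show ?thesis
    using parallelogram_law[of "x - a" "x - b"] by (simp add: norm_minus_commute)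
qed

lemma minimizing_sequence_Cauchy:
  fixes x :: "'a::complex_inner"
  assumes M: "csubspace M" and mM: "\<And>n. mm n \<in> M"
    and d: "\<And>m. m \<in> M \<Longrightarrow> d \<le> norm (x - m)" "0 \<le> d"
    and mmd: "\<And>n. norm (x - mm n) < d + 1 / (real n + 1)"
  shows "Cauchy mm"
proof (rule metric_CauchyI)
  define C where "C = 2 * d + 1"
  have C0: "0 < C" using d by (simp add: C_def)
  have sq: "(norm (x - mm n))\<^sup>2 \<le> d\<^sup>2 + C / (real n + 1)" for n
  proof -
    have e: "0 < 1 / (real n + 1)" "1 / (real n + 1) \<le> 1" by (auto simp: field_simps)
    have "(norm (x - mm n))\<^sup>2 \<le> (d + 1 / (real n + 1))\<^sup>2"
      using mmd[of n] d(1)[OF mM] d(2) by (intro power_mono) auto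
    also have "\<dots> = d\<^sup>2 + (2 * d + 1 / (real n + 1)) * (1 / (real n + 1))"
      by (simp add: power2_eq_square algebra_simps)
    also have "\<dots> \<le> d\<^sup>2 + C * (1 / (real n + 1))"
      using e d by (intro add_left_mono mult_right_mono) (auto simp: C_def)
    finally show ?thesis by simp
  qed
  have mid: "(dist (mm n) (mm k))\<^sup>2 \<le> 2 * C / (real n + 1) + 2 * C / (real k + 1)" for n k
  proof -
    have "scaleR (1/2) (mm n + mm k) \<in> M"
      by (intro csubspace_scaleR[OF M] csubspace_add[OF M] mM)
    then show ?thesis
      using norm_diff_sq_le_of_midpoint[OF d(1) d(2), of "mm n" "mm k"] sq[of n] sq[of k]
      by (simp add: dist_norm)
  qed
  fix e :: real assume e: "0 < e"
  obtain N :: nat where N: "4 * C / e\<^sup>2 < real N" using reals_Archimedean2 by blast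
  have N': "4 * C / (real N + 1) < e\<^sup>2"
    using N e C0 by (simp add: field_simps) (smt (verit) zero_less_power)
  show "\<exists>M. \<forall>m\<ge>M. \<forall>n\<ge>M. dist (mm m) (mm n) < e"
  proof (intro exI allI impI)
    fix m n assume mn: "N \<le> m" "N \<le> n"
    have "2 * C / (real m + 1) \<le> 2 * C / (real N + 1)" "2 * C / (real n + 1) \<le> 2 * C / (real N + 1)"
      using mn C0 by (auto intro!: divide_left_mono)
    then have "(dist (mm m) (mm n))\<^sup>2 < e\<^sup>2" using mid[of m n] N' by simp
    then show "dist (mm m) (mm n) < e"
      using e by (meson power_less_imp_less_base less_le_not_le zero_le_dist)
  qed
qed

lemma closed_csubspace_nearest_point:
  fixes x :: "'a::chilbert_space"
  assumes M: "csubspace M" "closed M"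
  shows "\<exists>m\<in>M. \<forall>m'\<in>M. norm (x - m) \<le> norm (x - m')"
proof -
  define D where "D = {norm (x - m) | m. m \<in> M}"
  define d where "d = Inf D"
  have Dne: "D \<noteq> {}" using csubspace_0[OF M(1)] by (auto simp: D_def)
  have Dbdd: "bdd_below D" by (auto simp: D_def intro!: bdd_belowI[of _ 0])
  have dle: "d \<le> norm (x - m)" if "m \<in> M" for m
    unfolding d_def by (rule cInf_lower) (use that Dbdd in \<open>auto simp: D_def\<close>)
  have d0: "0 \<le> d" unfolding d_def by (rule cInf_greatest[OF Dne]) (auto simp: D_def)
  have "\<exists>m\<in>M. norm (x - m) < d + 1 / (real n + 1)" for n
  proof -
    have "Inf D < d + 1 / (real n + 1)" by (simp add: d_def)
    then show ?thesis using cInf_less_iff[OF Dne Dbdd] by (auto simp: D_def)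
  qed
  then obtain mm where mmM: "\<And>n. mm n \<in> M" and mmd: "\<And>n. norm (x - mm n) < d + 1 / (real n + 1)"
    by metis
  obtain m where mlim: "mm \<longlonglongrightarrow> m"
    using minimizing_sequence_Cauchy[OF M(1) mmM dle d0 mmd] Cauchy_convergent_iff convergent_def
    by blast
  have "(\<lambda>n. norm (x - mm n)) \<longlonglongrightarrow> norm (x - m)"
    by (intro tendsto_intros mlim)
  moreover have "(\<lambda>n. norm (x - mm n)) \<longlonglongrightarrow> d"
  proof (rule real_tendsto_sandwich[where f="\<lambda>n. d" and h="\<lambda>n. d + 1 / (real n + 1)"])
    show "\<forall>\<^sub>F n in sequentially. d \<le> norm (x - mm n)" using dle mmM by auto
    show "\<forall>\<^sub>F n in sequentially. norm (x - mm n) \<le> d + 1 / (real n + 1)"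
      using mmd by (intro always_eventually allI less_imp_le)
    show "(\<lambda>n. d + 1 / (real n + 1)) \<longlonglongrightarrow> d"
      using tendsto_add[OF tendsto_const[of d] LIMSEQ_inverse_real_of_nat]
      by (simp add: inverse_eq_divide add.commute)
  qed simp
  ultimately have "norm (x - m) = d" by (rule LIMSEQ_unique)
  then show ?thesis using closed_sequentially[OF M(2) mmM mlim] dle by auto
qed

lemma nearest_point_orthogonal:
  assumes M: "csubspace M" and m: "m \<in> M" and near: "\<And>m'. m' \<in> M \<Longrightarrow> norm (x - m) \<le> norm (x - m')"
    and y: "y \<in> M"
  shows "cinner (x - m) y = 0"
proof -
  have "(cmod (cinner (x - m) y))\<^sup>2 \<le> 0 * (norm y)\<^sup>2"
  proof (rule cmod_sq_le_of_quadratic_nonneg)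
    fix t
    have "m + scaleC (- t) y \<in> M" using m y M by (intro csubspace_add csubspace_scaleC)
    moreover have "x - (m + scaleC (- t) y) = (x - m) + scaleC t y" by (simp add: scaleC_minus_left)
    ultimately have "(norm (x - m))\<^sup>2 \<le> (norm ((x - m) + scaleC t y))\<^sup>2"
      using near by (metis norm_ge_zero power_mono)
    then show "0 \<le> 0 + 2 * Re (cnj t * cinner (x - m) y) + (cmod t)\<^sup>2 * (norm y)\<^sup>2"
      by (simp add: norm_add_sq cinner_scaleC_right power_mult_distrib)
  qed simp
  then show ?thesis by simp
qed

lemma orth_proj_exists:
  fixes x :: "'a::chilbert_space"
  assumes M: "csubspace M" "closed M"
  shows "\<exists>m\<in>M. \<forall>y\<in>M. cinner (x - m) y = 0"
  using closed_csubspace_nearest_point[OF M, of x] nearest_point_orthogonal[OF M(1)] by blast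

lemma orth_proj_unique:
  assumes "csubspace M" "m \<in> M" "m' \<in> M" "\<forall>y\<in>M. cinner (x - m) y = 0" "\<forall>y\<in>M. cinner (x - m') y = 0"
  shows "m = m'"
proof -
  have d: "m - m' \<in> M" using assms by (simp add: csubspace_diff)
  have "cinner (m - m') (m - m') = cinner (x - m') (m - m') - cinner (x - m) (m - m')"
    by (simp add: cinner_diff_left)
  also have "\<dots> = 0" using assms d by simp
  finally show ?thesis by (simp add: cinner_self_eq_zero)
qed

lemma orth_proj_characterization:
  fixes x :: "'a::chilbert_space"
  assumes "csubspace M" "closed M"
  shows "orth_proj M x \<in> M \<and> (\<forall>y\<in>M. cinner (x - orth_proj M x) y = 0)"
proof -
  have "\<exists>!m. m \<in> M \<and> (\<forall>y\<in>M. cinner (x - m) y = 0)"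
    using orth_proj_exists[OF assms, of x] orth_proj_unique[OF assms(1)] by blast
  then show ?thesis unfolding orth_proj_def by (rule theI')
qed

lemma orth_proj_mem: "csubspace M \<Longrightarrow> closed M \<Longrightarrow> orth_proj M x \<in> M"
  and orth_proj_orthogonal:
    "csubspace M \<Longrightarrow> closed M \<Longrightarrow> y \<in> M \<Longrightarrow> cinner (x - orth_proj M x) y = 0"
  for x :: "'a::chilbert_space"
  using orth_proj_characterization[of M x] by auto

lemma orth_proj_eqI:
  fixes x :: "'a::chilbert_space"
  assumes "csubspace M" "closed M" "m \<in> M" "\<And>y. y \<in> M \<Longrightarrow> cinner (x - m) y = 0"
  shows "orth_proj M x = m"
  using orth_proj_unique[OF assms(1) orth_proj_mem[OF assms(1,2)] assms(3)] orth_proj_orthogonal[OF assms(1,2)] assms(4)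
  by blast

lemma orth_proj_id:
  fixes x :: "'a::chilbert_space"
  assumes "csubspace M" "closed M" "x \<in> M"
  shows "orth_proj M x = x"
  by (rule orth_proj_eqI[OF assms]) simp

lemma orth_proj_clinear:
  fixes M :: "'a::chilbert_space set"
  assumes M: "csubspace M" "closed M"
  shows "clinear (orth_proj M)"
proof (rule clinearI)
  fix x y :: 'a
  show "orth_proj M (x + y) = orth_proj M x + orth_proj M y"
  proof (rule orth_proj_eqI[OF M])
    show "orth_proj M x + orth_proj M y \<in> M" using orth_proj_mem[OF M] M(1) by (simp add: csubspace_add)
    fix z assume "z \<in> M"
    have e: "x + y - (orth_proj M x + orth_proj M y) = (x - orth_proj M x) + (y - orth_proj M y)" by simp
    show "cinner (x + y - (orth_proj M x + orth_proj M y)) z = 0"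
      unfolding e cinner_add_left using orth_proj_orthogonal[OF M \<open>z\<in>M\<close>] by simp
  qed
next
  fix a and x :: 'a
  show "orth_proj M (scaleC a x) = scaleC a (orth_proj M x)"
  proof (rule orth_proj_eqI[OF M])
    show "scaleC a (orth_proj M x) \<in> M" using orth_proj_mem[OF M] M(1) by (simp add: csubspace_scaleC)
    fix z assume "z \<in> M"
    have e: "scaleC a x - scaleC a (orth_proj M x) = scaleC a (x - orth_proj M x)" by (simp add: scaleC_diff_right)
    show "cinner (scaleC a x - scaleC a (orth_proj M x)) z = 0"
      unfolding e cinner_scaleC_left using orth_proj_orthogonal[OF M \<open>z\<in>M\<close>] by simp
  qed
qed

lemma orth_proj_pyth:
  fixes x :: "'a::chilbert_space"
  assumes M: "csubspace M" "closed M"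
  shows "(norm x)\<^sup>2 = (norm (orth_proj M x))\<^sup>2 + (norm (x - orth_proj M x))\<^sup>2"
proof -
  have "x = orth_proj M x + (x - orth_proj M x)" by simp
  then have "(norm x)\<^sup>2 = (norm (orth_proj M x + (x - orth_proj M x)))\<^sup>2" by simp
  also have "\<dots> = (norm (orth_proj M x))\<^sup>2 + (norm (x - orth_proj M x))\<^sup>2 + 2 * Re (cinner (orth_proj M x) (x - orth_proj M x))"
    by (rule norm_add_sq)
  also have "cinner (orth_proj M x) (x - orth_proj M x) = cnj (cinner (x - orth_proj M x) (orth_proj M x))"
    by (rule cinner_commute)
  also have "\<dots> = 0" using orth_proj_orthogonal[OF M orth_proj_mem[OF M]] by simp
  finally show ?thesis by simp
qed

lemma orth_proj_norm:
  fixes x :: "'a::chilbert_space"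
  assumes M: "csubspace M" "closed M"
  shows "norm (orth_proj M x) \<le> norm x"
proof -
  have "(norm (orth_proj M x))\<^sup>2 \<le> (norm x)\<^sup>2" using orth_proj_pyth[OF M, of x] by simp
  then show ?thesis by (rule power2_le_imp_le) simp
qed

lemma orth_proj_bcl:
  fixes M :: "'a::chilbert_space set"
  assumes M: "csubspace M" "closed M"
  shows "bounded_clinear (orth_proj M)"
  by (rule bounded_clinearI[where K=1]) (auto simp: orth_proj_clinear[OF M] orth_proj_norm[OF M])

lemma orth_proj_selfadj:
  fixes x y :: "'a::chilbert_space"
  assumes M: "csubspace M" "closed M"
  shows "cinner (orth_proj M x) y = cinner x (orth_proj M y)"
proof -
  let ?P = "orth_proj M"
  have 1: "cinner (?P x) y = cinner (?P x) (?P y)"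
  proof -
    have "cinner (?P x) (y - ?P y) = cnj (cinner (y - ?P y) (?P x))" by (rule cinner_commute)
    also have "\<dots> = 0" using orth_proj_orthogonal[OF M orth_proj_mem[OF M]] by simp
    finally show ?thesis by (simp add: cinner_diff_right)
  qed
  have 2: "cinner x (?P y) = cinner (?P x) (?P y)"
    using orth_proj_orthogonal[OF M orth_proj_mem[OF M, of y], of x] by (simp add: cinner_diff_left)
  show ?thesis using 1 2 by simp
qed

lemma orth_proj_zero_iff:
  fixes x :: "'a::chilbert_space"
  assumes M: "csubspace M" "closed M"
  shows "orth_proj M x = 0 \<longleftrightarrow> (\<forall>y\<in>M. cinner x y = 0)"
proof
  assume P0: "orth_proj M x = 0"
  show "\<forall>y\<in>M. cinner x y = 0"
  proof
    fix y assume "y \<in> M"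
    from orth_proj_orthogonal[OF M this, of x] show "cinner x y = 0" using P0 by simp
  qed
next
  assume "\<forall>y\<in>M. cinner x y = 0"
  then show "orth_proj M x = 0" by (intro orth_proj_eqI[OF M csubspace_0[OF M(1)]]) auto
qed

section \<open>Riesz representation and adjoints\<close>

lemma riesz_representation:
  fixes f :: "'a::chilbert_space \<Rightarrow> complex"
  assumes add: "\<And>x y. f (x + y) = f x + f y" and sc: "\<And>a x. f (scaleC a x) = a * f x"
    and bd: "\<And>x. cmod (f x) \<le> norm x * K"
  shows "\<exists>z. \<forall>x. f x = cinner x z"
proof (cases "\<forall>x. f x = 0")
  case True then show ?thesis by (intro exI[of _ 0]) simp
next
  case False
  then obtain u where u: "f u \<noteq> 0" by auto
  have bl: "bounded_linear f"
    by (rule bounded_linear_intro[where K=K]) (auto simp: add bd sc[of "complex_of_real _", folded scaleR_scaleC] scaleR_conv_of_real)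
  define N where "N = {x. f x = 0}"
  have Nc: "closed N" unfolding N_def
    by (intro closed_Collect_eq bounded_linear.continuous_on[OF bl] continuous_on_id continuous_on_const)
  have f0: "f 0 = 0" using sc[of 0 0] by simp
  have Ns: "csubspace N" by (auto simp: csubspace_def N_def add sc f0)
  define w where "w = u - orth_proj N u"
  have wperp: "\<And>y. y \<in> N \<Longrightarrow> cinner w y = 0" using orth_proj_orthogonal[OF Ns Nc] by (simp add: w_def)
  have fw: "f w = f u"
  proof -
    have "orth_proj N u \<in> N" by (rule orth_proj_mem[OF Ns Nc])
    then have "f (orth_proj N u) = 0" by (simp add: N_def)
    moreover have "f w + f (orth_proj N u) = f u" using add[of w "orth_proj N u"] by (simp add: w_def)
    ultimately show ?thesis by simp
  qed
  have w0: "w \<noteq> 0" using fw u f0 by auto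
  have nw: "cinner w w \<noteq> 0" using w0 by (simp add: cinner_self_eq_zero)
  define z where "z = scaleC (cnj (f w) / cnj (cinner w w)) w"
  show ?thesis
  proof (intro exI allI)
    fix x
    define v where "v = scaleC (f w) x - scaleC (f x) w"
    have "v = scaleC (f w) x + scaleC (- f x) w" by (simp add: v_def scaleC_minus_left)
    then have "f v = f w * f x + (- f x) * f w" by (simp add: add sc)
    then have "v \<in> N" by (simp add: N_def)
    then have "cinner v w = 0" using wperp[of v] by (simp add: cinner_commute[of v w])
    then have "f w * cinner x w = f x * cinner w w"
      by (simp add: v_def cinner_diff_left cinner_scaleC_left)
    then have "f x = f w * cinner x w / cinner w w" using nw by (simp add: field_simps)
    also have "\<dots> = cinner x z"
      by (simp add: z_def cinner_scaleC_right)
    finally show "f x = cinner x z" .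
  qed
qed

lemma adjoint_exists:
  fixes S :: "'a::chilbert_space \<Rightarrow> 'a"
  assumes S: "bounded_clinear S"
  shows "\<exists>R. \<forall>x y. cinner (S x) y = cinner x (R y)"
proof -
  obtain K where K: "\<And>x. norm (S x) \<le> norm x * K" "K > 0" using bounded_clinear_bound[OF S] by auto
  have "\<exists>z. \<forall>x. cinner (S x) y = cinner x z" for y
  proof (rule riesz_representation[where K="K * norm y"])
    show "cinner (S (x + x')) y = cinner (S x) y + cinner (S x') y" for x x'
      by (simp add: bounded_clinear_add[OF S] cinner_add_left)
    show "cinner (S (scaleC a x)) y = a * cinner (S x) y" for a x
      by (simp add: bounded_clinear_scaleC[OF S] cinner_scaleC_left)
    show "cmod (cinner (S x) y) \<le> norm x * (K * norm y)" for x
    proof -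
      have "cmod (cinner (S x) y) \<le> norm (S x) * norm y" by (rule norm_cinner_le)
      also have "\<dots> \<le> norm x * K * norm y" using K by (intro mult_right_mono) auto
      finally show ?thesis by (simp add: mult.assoc)
    qed
  qed
  then show ?thesis by metis
qed

lemma cinner_adjoint_right:
  fixes S :: "'a::chilbert_space \<Rightarrow> 'a"
  assumes S: "bounded_clinear S"
  shows "cinner (S x) y = cinner x (adjoint S y)"
proof -
  have "\<exists>!R. \<forall>x y. cinner (S x) y = cinner x (R y)"
  proof -
    obtain R where R: "\<forall>x y. cinner (S x) y = cinner x (R y)" using adjoint_exists[OF S] by blast
    moreover have "R' = R" if "\<forall>x y. cinner (S x) y = cinner x (R' y)" for R'
      using that R by (intro ext cinner_ext_right) metis
    ultimately show ?thesis by blast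
  qed
  then have "\<forall>x y. cinner (S x) y = cinner x (adjoint S y)"
    unfolding adjoint_def by (rule theI')
  then show ?thesis by blast
qed

lemma cinner_adjoint_left:
  fixes S :: "'a::chilbert_space \<Rightarrow> 'a"
  assumes S: "bounded_clinear S"
  shows "cinner (adjoint S x) y = cinner x (S y)"
  by (metis cinner_adjoint_right[OF S] cinner_commute)

lemma bounded_clinear_adjoint:
  fixes S :: "'a::chilbert_space \<Rightarrow> 'a"
  assumes S: "bounded_clinear S"
  shows "bounded_clinear (adjoint S)"
proof -
  obtain K where K: "\<And>x. norm (S x) \<le> norm x * K" "K > 0" using bounded_clinear_bound[OF S] by auto
  show ?thesis
  proof (rule bounded_clinearI[where K=K])
    show "clinear (adjoint S)"
    proof (rule clinearI)
      show "adjoint S (x + y) = adjoint S x + adjoint S y" for x y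
        by (rule cinner_ext_right) (simp add: cinner_adjoint_right[OF S, symmetric] cinner_add_right)
      show "adjoint S (scaleC a x) = scaleC a (adjoint S x)" for a x
        by (rule cinner_ext_right) (simp add: cinner_adjoint_right[OF S, symmetric] cinner_scaleC_right)
    qed
    fix y
    have "(norm (adjoint S y))\<^sup>2 = Re (cinner (S (adjoint S y)) y)"
      by (simp add: norm_sq_cinner cinner_adjoint_right[OF S])
    also have "\<dots> \<le> cmod (cinner (S (adjoint S y)) y)" by (rule complex_Re_le_cmod)
    also have "\<dots> \<le> norm (S (adjoint S y)) * norm y" by (rule norm_cinner_le)
    also have "\<dots> \<le> norm (adjoint S y) * K * norm y" using K by (intro mult_right_mono) auto
    finally have "norm (adjoint S y) * norm (adjoint S y) \<le> norm (adjoint S y) * (K * norm y)"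
      by (simp add: power2_eq_square mult.assoc)
    then show "norm (adjoint S y) \<le> norm y * K"
      using K(2) by (cases "norm (adjoint S y) = 0") (auto simp: mult.commute)
  qed
qed


lemma cinner_funpow_adjoint:
  fixes T :: "'a::chilbert_space \<Rightarrow> 'a"
  assumes T: "bounded_clinear T"
  shows "cinner ((T ^^ n) x) y = cinner x ((adjoint T ^^ n) y)"
proof (induct n arbitrary: y)
  case 0 then show ?case by simp
next
  case (Suc n)
  have "cinner ((T ^^ Suc n) x) y = cinner ((T ^^ n) x) (adjoint T y)" by (simp add: cinner_adjoint_right[OF T])
  also have "\<dots> = cinner x ((adjoint T ^^ n) (adjoint T y))" by (rule Suc)
  also have "(adjoint T ^^ n) (adjoint T y) = (adjoint T ^^ Suc n) y" by (simp add: funpow_swap1)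
  finally show ?case .
qed

section \<open>Square roots of positive operators\<close>

text \<open>For a self-adjoint contraction \<open>B\<close>, the iteration \<open>Q\<^sub>0 = 0\<close>, \<open>Q\<^sub>k\<^sub>+\<^sub>1 = (B + Q\<^sub>k\<^sup>2) / 2\<close>
  converges to a fixed point \<open>Q\<close>, and then \<open>(I - Q)\<^sup>2 = I - B\<close>.  Convergence comes from
  comparison with the scalar iteration for \<open>B = I\<close>, which increases to \<open>1\<close> and dominates
  the increments: \<open>\<parallel>Q\<^sub>k\<^sub>+\<^sub>1 - Q\<^sub>k\<parallel> \<le> q\<^sub>k\<^sub>+\<^sub>1 - q\<^sub>k\<close>.  With \<open>B = I - A / K\<close> this yields
  \<open>\<surd>A = \<surd>K (I - Q)\<close>.\<close>

primrec sqrt_iter :: "('a::complex_inner \<Rightarrow> 'a) \<Rightarrow> nat \<Rightarrow> 'a \<Rightarrow> 'a" where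
  "sqrt_iter B 0 = (\<lambda>x. 0)"
| "sqrt_iter B (Suc k) = (\<lambda>x. scaleR (1/2) (B x + sqrt_iter B k (sqrt_iter B k x)))"

primrec sqrt_iter_bound :: "nat \<Rightarrow> real" where
  "sqrt_iter_bound 0 = 0"
| "sqrt_iter_bound (Suc k) = (1 + (sqrt_iter_bound k)\<^sup>2) / 2"

lemma sqrt_iter_bound_range: "0 \<le> sqrt_iter_bound k \<and> sqrt_iter_bound k \<le> 1"
proof (induct k)
  case 0 then show ?case by simp
next
  case (Suc k)
  then have "(sqrt_iter_bound k)\<^sup>2 \<le> 1" by (simp add: power_le_one)
  then show ?case using Suc by simp
qed

lemma sqrt_iter_bound_le_Suc: "sqrt_iter_bound k \<le> sqrt_iter_bound (Suc k)"
proof (induct k)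
  case 0 then show ?case by simp
next
  case (Suc k)
  have "(sqrt_iter_bound k)\<^sup>2 \<le> (sqrt_iter_bound (Suc k))\<^sup>2" using Suc sqrt_iter_bound_range[of k] by (intro power_mono) auto
  then show ?case by simp
qed

lemma incseq_sqrt_iter_bound: "incseq sqrt_iter_bound"
  using sqrt_iter_bound_le_Suc by (simp add: incseq_Suc_iff)

lemma convergent_sqrt_iter_bound: "convergent sqrt_iter_bound"
proof -
  obtain L where "sqrt_iter_bound \<longlonglongrightarrow> L" using incseq_convergent[OF incseq_sqrt_iter_bound, of 1] sqrt_iter_bound_range by blast
  then show ?thesis by (rule convergentI)
qed

lemma sqrt_iter_bound_mono: "k \<le> m \<Longrightarrow> sqrt_iter_bound k \<le> sqrt_iter_bound m"
  using incseq_sqrt_iter_bound by (simp add: incseq_def)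

locale selfadjoint_contraction =
  fixes B :: "'a::chilbert_space \<Rightarrow> 'a"
  assumes B_bcl: "bounded_clinear B"
    and B_sa: "\<And>x y. cinner (B x) y = cinner x (B y)"
    and B_norm: "\<And>x. norm (B x) \<le> norm x"
begin

abbreviation "Q k \<equiv> sqrt_iter B k"

lemma Q_bcl: "bounded_clinear (Q k)"
proof (induct k)
  case 0 then show ?case by (intro bounded_clinearI[where K=0] clinearI) auto
next
  case (Suc k)
  have "bounded_clinear (\<lambda>x. scaleC (complex_of_real (1/2)) (B x + Q k (Q k x)))"
    by (rule bounded_clinear_scaleC_comp, rule bounded_clinear_plus[OF B_bcl bounded_clinear_compose[OF Suc Suc]])
  then show ?case by (simp add: scaleR_scaleC)
qed

lemma Q_commute:
  assumes C: "clinear C" and CB: "\<And>x. C (B x) = B (C x)"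
  shows "C (Q k x) = Q k (C x)"
proof (induct k arbitrary: x)
  case 0 then show ?case by (simp add: clinear_zero[OF C])
next
  case (Suc k)
  show ?case by (simp add: scaleR_scaleC clinear_scaleC[OF C] clinear_add[OF C] CB Suc)
qed

lemma Q_sa: "cinner (Q k x) y = cinner x (Q k y)"
proof (induct k arbitrary: x y)
  case 0 then show ?case by simp
next
  case (Suc k)
  show ?case by (simp add: scaleR_scaleC cinner_scaleC_left cinner_scaleC_right cinner_add_left
        cinner_add_right B_sa Suc)
qed

lemma Q_Suc_Suc_diff:
  "Q (Suc (Suc k)) x - Q (Suc k) x
     = scaleR (1/2) (Q (Suc k) (Q (Suc k) x - Q k x) + (Q (Suc k) (Q k x) - Q k (Q k x)))"
proof -
  have telescope: "\<And>a b c::'a. a - c = (a - b) + (b - c)" by simp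
  have "Q (Suc (Suc k)) x - Q (Suc k) x = scaleR (1/2) (Q (Suc k) (Q (Suc k) x) - Q k (Q k x))"
    by (simp only: sqrt_iter.simps(2)) (simp add: algebra_simps)
  also have "Q (Suc k) (Q (Suc k) x) - Q k (Q k x)
      = Q (Suc k) (Q (Suc k) x - Q k x) + (Q (Suc k) (Q k x) - Q k (Q k x))"
    unfolding bounded_clinear_diff[OF Q_bcl] by (rule telescope)
  finally show ?thesis .
qed

lemma Q_bounds:
  "norm (Q k x) \<le> sqrt_iter_bound k * norm x
   \<and> norm (Q (Suc k) x - Q k x) \<le> (sqrt_iter_bound (Suc k) - sqrt_iter_bound k) * norm x"
proof (induct k arbitrary: x)
  case 0
  show ?case using B_norm[of x] by simp
next
  case (Suc k)
  let ?q = sqrt_iter_bound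
  have q: "0 \<le> ?q k" "?q k \<le> ?q (Suc k)" "?q (Suc k) \<le> 1"
    using sqrt_iter_bound_range[of k] sqrt_iter_bound_range[of "Suc k"] sqrt_iter_bound_le_Suc[of k]
    by blast+
  have QQ: "norm (Q k (Q k y)) \<le> (?q k)\<^sup>2 * norm y" for y
  proof -
    have "norm (Q k (Q k y)) \<le> ?q k * norm (Q k y)" using Suc by blast
    also have "\<dots> \<le> ?q k * (?q k * norm y)" using Suc q(1) by (intro mult_left_mono) auto
    finally show ?thesis by (simp add: power2_eq_square mult.assoc)
  qed
  have norm_Q_Suc: "norm (Q (Suc k) y) \<le> ?q (Suc k) * norm y" for y
  proof -
    have "norm (Q (Suc k) y) = (1/2) * norm (B y + Q k (Q k y))" by simp
    also have "\<dots> \<le> (1/2) * (norm y + (?q k)\<^sup>2 * norm y)"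
      using norm_triangle_le[OF add_mono[OF B_norm[of y] QQ[of y]]] by simp
    also have "\<dots> = ?q (Suc k) * norm y" by (simp add: algebra_simps)
    finally show ?thesis .
  qed
  define d where "d = ?q (Suc k) - ?q k"
  have b1: "norm (Q (Suc k) (Q (Suc k) x - Q k x)) \<le> ?q (Suc k) * (d * norm x)"
  proof -
    have "norm (Q (Suc k) x - Q k x) \<le> d * norm x" using Suc[of x] by (simp add: d_def)
    then have "?q (Suc k) * norm (Q (Suc k) x - Q k x) \<le> ?q (Suc k) * (d * norm x)"
      using q by (intro mult_left_mono) auto
    then show ?thesis using norm_Q_Suc[of "Q (Suc k) x - Q k x"] by linarith
  qed
  have b2: "norm (Q (Suc k) (Q k x) - Q k (Q k x)) \<le> d * (?q k * norm x)"
  proof -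
    have "norm (Q k x) \<le> ?q k * norm x" using Suc[of x] by blast
    then have "d * norm (Q k x) \<le> d * (?q k * norm x)" using q by (intro mult_left_mono) (auto simp: d_def)
    then show ?thesis using Suc[of "Q k x"] by (simp add: d_def)
  qed
  have "norm (Q (Suc (Suc k)) x - Q (Suc k) x)
      \<le> (1/2) * (?q (Suc k) * (d * norm x) + d * (?q k * norm x))"
    unfolding Q_Suc_Suc_diff using norm_triangle_le[OF add_mono[OF b1 b2]] by simp
  also have "\<dots> = (?q (Suc (Suc k)) - ?q (Suc k)) * norm x"
    by (simp add: d_def power2_eq_square algebra_simps)
  finally show ?case using norm_Q_Suc by blast
qed

lemma Q_norm: "norm (Q k x) \<le> norm x"
proof -
  have "sqrt_iter_bound k * norm x \<le> 1 * norm x" using sqrt_iter_bound_range[of k] by (intro mult_right_mono) auto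
  then show ?thesis using Q_bounds[of k x] by simp
qed

lemma Q_cauchy_bound: "k \<le> m \<Longrightarrow> norm (Q m x - Q k x) \<le> (sqrt_iter_bound m - sqrt_iter_bound k) * norm x"
proof (induct m rule: dec_induct)
  case base then show ?case by simp
next
  case (step m)
  have "norm (Q (Suc m) x - Q k x) \<le> norm (Q (Suc m) x - Q m x) + norm (Q m x - Q k x)"
    using norm_triangle_ineq[of "Q (Suc m) x - Q m x" "Q m x - Q k x"] by simp
  also have "\<dots> \<le> (sqrt_iter_bound (Suc m) - sqrt_iter_bound m) * norm x + (sqrt_iter_bound m - sqrt_iter_bound k) * norm x"
    using Q_bounds[of m x] step by (intro add_mono) auto
  finally show ?case by (simp add: algebra_simps)
qed

lemma Q_Cauchy: "Cauchy (\<lambda>k. Q k x)"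
proof (rule metric_CauchyI)
  fix e :: real assume e: "0 < e"
  obtain L where "sqrt_iter_bound \<longlonglongrightarrow> L"
    using convergent_sqrt_iter_bound by (auto simp: convergent_def)
  then have "(\<lambda>k. sqrt_iter_bound k * norm x) \<longlonglongrightarrow> L * norm x"
    by (rule tendsto_mult_right)
  then have "Cauchy (\<lambda>k. sqrt_iter_bound k * norm x)"
    by (rule LIMSEQ_imp_Cauchy)
  then obtain N where N: "\<And>m n. m \<ge> N \<Longrightarrow> n \<ge> N
      \<Longrightarrow> dist (sqrt_iter_bound m * norm x) (sqrt_iter_bound n * norm x) < e"
    using e metric_CauchyD by blast
  have "dist (Q m x) (Q n x) \<le> dist (sqrt_iter_bound m * norm x) (sqrt_iter_bound n * norm x)" for m n
  proof (cases "n \<le> m")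
    case True
    then show ?thesis using Q_cauchy_bound[of n m x] sqrt_iter_bound_mono[of n m]
      by (simp add: dist_norm dist_real_def left_diff_distrib)
  next
    case False
    then show ?thesis using Q_cauchy_bound[of m n x] sqrt_iter_bound_mono[of m n]
      by (simp add: dist_norm dist_real_def norm_minus_commute left_diff_distrib)
  qed
  then show "\<exists>M. \<forall>m\<ge>M. \<forall>n\<ge>M. dist (Q m x) (Q n x) < e"
    using N by (blast intro: le_less_trans)
qed

definition Qinf :: "'a \<Rightarrow> 'a" where "Qinf x = lim (\<lambda>k. Q k x)"

lemma Qinf_lim: "(\<lambda>k. Q k x) \<longlonglongrightarrow> Qinf x"
  unfolding Qinf_def using Q_Cauchy[of x] Cauchy_convergent_iff convergent_LIMSEQ_iff by blast

lemma Qinf_bcl: "bounded_clinear Qinf"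
proof (rule bounded_clinearI[where K=1])
  show "clinear Qinf"
  proof (rule clinearI)
    fix x y
    have "(\<lambda>k. Q k (x + y)) \<longlonglongrightarrow> Qinf x + Qinf y"
      using tendsto_add[OF Qinf_lim[of x] Qinf_lim[of y]] by (simp add: bounded_clinear_add[OF Q_bcl])
    then show "Qinf (x + y) = Qinf x + Qinf y" using Qinf_lim LIMSEQ_unique by blast
  next
    fix a x
    have "(\<lambda>k. Q k (scaleC a x)) \<longlonglongrightarrow> scaleC a (Qinf x)"
      using tendsto_scaleC[OF tendsto_const Qinf_lim[of x]] by (simp add: bounded_clinear_scaleC[OF Q_bcl])
    then show "Qinf (scaleC a x) = scaleC a (Qinf x)" using Qinf_lim LIMSEQ_unique by blast
  qed
  fix x
  have "norm (Qinf x) \<le> norm x"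
    using tendsto_norm[OF Qinf_lim[of x]] Q_norm by (intro LIMSEQ_le_const2) auto
  then show "norm (Qinf x) \<le> norm x * 1" by simp
qed

lemma Qinf_fixpoint: "Qinf x = scaleR (1/2) (B x + Qinf (Qinf x))"
proof -
  have 1: "(\<lambda>k. Q (Suc k) x) \<longlonglongrightarrow> Qinf x" using Qinf_lim[of x] by (rule LIMSEQ_Suc)
  have 2: "(\<lambda>k. Q k (Q k x)) \<longlonglongrightarrow> Qinf (Qinf x)"
  proof -
    have a: "(\<lambda>k. Q k (Q k x) - Q k (Qinf x)) \<longlonglongrightarrow> 0"
    proof (rule tendsto_norm_zero_cancel, rule real_tendsto_sandwich[where f="\<lambda>k. 0" and h="\<lambda>k. norm (Q k x - Qinf x)"])
      show "\<forall>\<^sub>F k in sequentially. 0 \<le> norm (Q k (Q k x) - Q k (Qinf x))" by simp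
      show "\<forall>\<^sub>F k in sequentially. norm (Q k (Q k x) - Q k (Qinf x)) \<le> norm (Q k x - Qinf x)"
        using Q_norm by (simp add: bounded_clinear_diff[OF Q_bcl, symmetric])
      show "(\<lambda>k. 0) \<longlonglongrightarrow> 0" by simp
      show "(\<lambda>k. norm (Q k x - Qinf x)) \<longlonglongrightarrow> 0"
        using tendsto_norm_zero[OF LIM_zero[OF Qinf_lim[of x]]] .
    qed
    have "(\<lambda>k. (Q k (Q k x) - Q k (Qinf x)) + Q k (Qinf x)) \<longlonglongrightarrow> 0 + Qinf (Qinf x)"
      by (intro tendsto_add a Qinf_lim)
    then show ?thesis by simp
  qed
  have "(\<lambda>k. Q (Suc k) x) \<longlonglongrightarrow> scaleR (1/2) (B x + Qinf (Qinf x))"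
    by (simp only: sqrt_iter.simps) (intro tendsto_scaleR tendsto_add tendsto_const 2)
  then show ?thesis using 1 LIMSEQ_unique by blast
qed

lemma Qinf_sa: "cinner (Qinf x) y = cinner x (Qinf y)"
proof -
  have "(\<lambda>k. cinner (Q k x) y) \<longlonglongrightarrow> cinner (Qinf x) y" by (intro tendsto_cinner Qinf_lim tendsto_const)
  moreover have "(\<lambda>k. cinner x (Q k y)) \<longlonglongrightarrow> cinner x (Qinf y)" by (intro tendsto_cinner Qinf_lim tendsto_const)
  ultimately show ?thesis using Q_sa LIMSEQ_unique by simp
qed

lemma Qinf_norm: "norm (Qinf x) \<le> norm x"
  using tendsto_norm[OF Qinf_lim[of x]] Q_norm by (intro LIMSEQ_le_const2) auto

lemma Qinf_commute:
  assumes C: "bounded_clinear C" and CB: "\<And>x. C (B x) = B (C x)"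
  shows "C (Qinf x) = Qinf (C x)"
proof -
  have "(\<lambda>k. C (Q k x)) \<longlonglongrightarrow> C (Qinf x)" by (rule bounded_clinear_tendsto[OF C Qinf_lim])
  moreover have "(\<lambda>k. C (Q k x)) \<longlonglongrightarrow> Qinf (C x)"
    using Qinf_lim[of "C x"] Q_commute[OF bounded_clinear_clinear[OF C] CB] by simp
  ultimately show ?thesis using LIMSEQ_unique by blast
qed

definition sqrt_compl :: "'a \<Rightarrow> 'a" where "sqrt_compl x = x - Qinf x"

lemma sqrt_compl_bcl: "bounded_clinear sqrt_compl"
  unfolding sqrt_compl_def by (intro bounded_clinear_sub bounded_clinear_id Qinf_bcl)

lemma sqrt_compl_sa: "cinner (sqrt_compl x) y = cinner x (sqrt_compl y)"
  by (simp add: sqrt_compl_def cinner_diff_left cinner_diff_right Qinf_sa)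

lemma sqrt_compl_nonneg: "nonneg_form sqrt_compl"
  unfolding nonneg_form_def
proof
  fix x
  have im: "Im (cinner (sqrt_compl x) x) = 0"
  proof -
    have "cinner (sqrt_compl x) x = cnj (cinner (sqrt_compl x) x)" using sqrt_compl_sa[of x x] cinner_commute[of x "sqrt_compl x"] by simp
    then have "Im (cinner (sqrt_compl x) x) = Im (cnj (cinner (sqrt_compl x) x))" by simp
    then show ?thesis by simp
  qed
  have "Re (cinner (Qinf x) x) \<le> cmod (cinner (Qinf x) x)" by (rule complex_Re_le_cmod)
  also have "\<dots> \<le> norm (Qinf x) * norm x" by (rule norm_cinner_le)
  also have "\<dots> \<le> norm x * norm x" using Qinf_norm by (intro mult_right_mono) auto
  finally have "0 \<le> Re (cinner (sqrt_compl x) x)"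
    by (simp add: sqrt_compl_def cinner_diff_left norm_sq_cinner[symmetric] power2_eq_square)
  then show "Im (cinner (sqrt_compl x) x) = 0 \<and> 0 \<le> Re (cinner (sqrt_compl x) x)" using im by simp
qed

lemma sqrt_compl_sq: "sqrt_compl (sqrt_compl x) = x - B x"
proof -
  have "sqrt_compl (sqrt_compl x) = x - Qinf x - Qinf x + Qinf (Qinf x)"
    by (simp add: sqrt_compl_def bounded_clinear_diff[OF Qinf_bcl])
  also have "Qinf (Qinf x) = scaleR 2 (Qinf x) - B x"
  proof -
    have "scaleR 2 (Qinf x) = scaleR 2 (scaleR (1/2) (B x + Qinf (Qinf x)))" using Qinf_fixpoint[of x] by simp
    also have "\<dots> = B x + Qinf (Qinf x)" by simp
    finally show ?thesis by simp
  qed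
  finally show ?thesis by (simp add: scaleR_2)
qed

lemma sqrt_compl_commute:
  assumes C: "bounded_clinear C" and CB: "\<And>x. C (B x) = B (C x)"
  shows "C (sqrt_compl x) = sqrt_compl (C x)"
  by (simp add: sqrt_compl_def bounded_clinear_diff[OF C] Qinf_commute[OF C CB])

end

lemma norm_le_of_nonneg_form_le:
  assumes B: "clinear B" and nn: "nonneg_form B" and le: "\<And>x. Re (cinner (B x) x) \<le> (norm x)\<^sup>2"
  shows "norm (B x) \<le> norm x"
proof -
  have "(cmod (cinner (B x) (B x)))\<^sup>2 \<le> Re (cinner (B x) x) * Re (cinner (B (B x)) (B x))"
    by (rule nonneg_form_cauchy_schwarz[OF B nn])
  also have "\<dots> \<le> (norm x)\<^sup>2 * (norm (B x))\<^sup>2"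
    using le[of x] le[of "B x"] nn by (intro mult_mono) (auto simp: nonneg_form_def)
  moreover have "cmod (cinner (B x) (B x)) = (norm (B x))\<^sup>2"
    by (simp add: cinner_self norm_power del: of_real_power)
  ultimately have "(norm (B x))\<^sup>2 * (norm (B x))\<^sup>2 \<le> (norm x)\<^sup>2 * (norm (B x))\<^sup>2"
    by (simp only: power2_eq_square)
  then have "(norm (B x))\<^sup>2 \<le> (norm x)\<^sup>2" by (rule le_of_mult_self_le[rotated]) simp
  then show ?thesis by (rule power2_le_imp_le) simp
qed

lemma positive_sa:
  fixes S :: "'a::complex_inner \<Rightarrow> 'a"
  shows "positive_op S \<Longrightarrow> cinner (S x) y = cinner x (S y)"
  by (rule nonneg_form_selfadj[OF bounded_clinear_clinear[OF positive_op_bcl] positive_op_nonneg_form])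

lemma selfadjoint_contraction_id_minus_positive:
  fixes A :: "'a::chilbert_space \<Rightarrow> 'a"
  assumes A: "positive_op A" and K: "\<And>x. norm (A x) \<le> norm x * K" "K > 0"
  shows "selfadjoint_contraction (\<lambda>x. x - scaleC (complex_of_real (1/K)) (A x))"
proof -
  define B where "B x = x - scaleC (complex_of_real (1/K)) (A x)" for x
  have Bb: "bounded_clinear B" unfolding B_def
    by (intro bounded_clinear_sub bounded_clinear_id bounded_clinear_scaleC_comp positive_op_bcl A)
  have Anf: "0 \<le> Re (cinner (A x) x)" "Im (cinner (A x) x) = 0" for x
    using A by (auto simp: positive_op_def)
  have Ale: "Re (cinner (A x) x) \<le> K * (norm x)\<^sup>2" for x
  proof -
    have "Re (cinner (A x) x) \<le> norm (A x) * norm x"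
      using complex_Re_le_cmod norm_cinner_le order_trans by blast
    also have "\<dots> \<le> norm x * K * norm x" using K by (intro mult_right_mono) auto
    finally show ?thesis by (simp add: power2_eq_square mult_ac)
  qed
  have ReB: "Re (cinner (B x) x) = (norm x)\<^sup>2 - Re (cinner (A x) x) / K" for x
    by (simp add: B_def cinner_diff_left cinner_scaleC_left norm_sq_cinner)
  have Bnn: "nonneg_form B"
    unfolding nonneg_form_def
  proof
    fix x
    have "Re (cinner (A x) x) / K \<le> (norm x)\<^sup>2"
      using Ale[of x] K(2) by (simp add: divide_le_eq mult.commute)
    then show "Im (cinner (B x) x) = 0 \<and> 0 \<le> Re (cinner (B x) x)"
      using ReB[of x] Anf(2)[of x] by (simp add: B_def cinner_diff_left cinner_scaleC_left cinner_self)
  qed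
  have "Re (cinner (B x) x) \<le> (norm x)\<^sup>2" for x
    using ReB[of x] Anf(1)[of x] K(2) by simp
  then have "norm (B x) \<le> norm x" for x
    by (rule norm_le_of_nonneg_form_le[OF bounded_clinear_clinear[OF Bb] Bnn])
  moreover have "cinner (B x) y = cinner x (B y)" for x y
    by (simp add: B_def cinner_diff_left cinner_diff_right cinner_scaleC_left cinner_scaleC_right
        positive_sa[OF A])
  ultimately show ?thesis using Bb unfolding B_def by unfold_locales auto
qed

lemma positive_sqrt_exists:
  fixes A :: "'a::chilbert_space \<Rightarrow> 'a"
  assumes A: "positive_op A"
  shows "\<exists>S. positive_op S \<and> (\<forall>x. S (S x) = A x)
           \<and> (\<forall>C. bounded_clinear C \<and> (\<forall>x. C (A x) = A (C x)) \<longrightarrow> (\<forall>x. C (S x) = S (C x)))"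
proof -
  obtain K where K: "\<And>x. norm (A x) \<le> norm x * K" "K > 0"
    using bounded_clinear_bound[OF positive_op_bcl[OF A]] by auto
  define B where "B x = x - scaleC (complex_of_real (1/K)) (A x)" for x
  interpret selfadjoint_contraction B
    unfolding B_def[abs_def] by (rule selfadjoint_contraction_id_minus_positive[OF A K])
  define S where "S x = scaleC (complex_of_real (sqrt K)) (sqrt_compl x)" for x
  have "positive_op S"
    unfolding positive_op_def
  proof (intro conjI allI)
    show "bounded_clinear S" unfolding S_def by (intro bounded_clinear_scaleC_comp sqrt_compl_bcl)
    fix x
    have "cinner (S x) x = complex_of_real (sqrt K) * cinner (sqrt_compl x) x"
      by (simp add: S_def cinner_scaleC_left)
    then show "Im (cinner (S x) x) = 0" "0 \<le> Re (cinner (S x) x)"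
      using sqrt_compl_nonneg K(2) by (auto simp: nonneg_form_def)
  qed
  moreover have "S (S x) = A x" for x
  proof -
    have "S (S x) = scaleC (complex_of_real (sqrt K) * complex_of_real (sqrt K)) (sqrt_compl (sqrt_compl x))"
      by (simp add: S_def bounded_clinear_scaleC[OF sqrt_compl_bcl] scaleC_scaleC)
    also have "complex_of_real (sqrt K) * complex_of_real (sqrt K) = complex_of_real K"
      using K(2) by (simp flip: of_real_mult)
    also have "sqrt_compl (sqrt_compl x) = scaleC (complex_of_real (1/K)) (A x)"
      by (simp add: sqrt_compl_sq B_def)
    also have "scaleC (complex_of_real K) (scaleC (complex_of_real (1/K)) (A x)) = A x"
      using K(2) by (simp add: scaleC_scaleC flip: of_real_mult)
    finally show ?thesis .
  qed
  moreover have "C (S x) = S (C x)" if C: "bounded_clinear C" "\<And>x. C (A x) = A (C x)" for C x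
  proof -
    have "C (B y) = B (C y)" for y
      by (simp add: B_def bounded_clinear_diff[OF C(1)] bounded_clinear_scaleC[OF C(1)] C(2))
    then show ?thesis
      by (simp add: S_def bounded_clinear_scaleC[OF C(1)] sqrt_compl_commute[OF C(1)])
  qed
  ultimately show ?thesis by blast
qed

lemma commuting_positive_sqrt_unique:
  fixes S S' :: "'a::chilbert_space \<Rightarrow> 'a"
  assumes S: "positive_op S" and S': "positive_op S'" and eq: "\<And>x. S (S x) = S' (S' x)"
    and comm: "\<And>x. S (S' x) = S' (S x)"
  shows "S x = S' x"
proof -
  have Sb: "bounded_clinear S" and S'b: "bounded_clinear S'" using S S' by (auto simp: positive_op_def)
  define D where "D x = S x - S' x" for x
  have Dsa: "cinner (D x) y = cinner x (D y)" for x y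
    by (simp add: D_def cinner_diff_left cinner_diff_right positive_sa[OF S] positive_sa[OF S'])
  have sum0: "S (D x) + S' (D x) = 0" for x
    by (simp add: D_def bounded_clinear_diff[OF Sb] bounded_clinear_diff[OF S'b] eq comm)
  have r1: "0 \<le> Re (cinner (S (D x)) (D x))" and r2: "0 \<le> Re (cinner (S' (D x)) (D x))"
    using S S' by (auto simp: positive_op_def)
  have "Re (cinner (S (D x)) (D x)) + Re (cinner (S' (D x)) (D x)) = 0"
    using arg_cong[OF sum0[of x], of "\<lambda>v. Re (cinner v (D x))"] by (simp add: cinner_add_left)
  then have z1: "Re (cinner (S (D x)) (D x)) = 0" and z2: "Re (cinner (S' (D x)) (D x)) = 0"
    using r1 r2 by linarith+
  have "S (D x) = 0" by (rule nonneg_form_eq_0[OF bounded_clinear_clinear[OF Sb] positive_op_nonneg_form[OF S] z1])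
  moreover have "S' (D x) = 0" by (rule nonneg_form_eq_0[OF bounded_clinear_clinear[OF S'b] positive_op_nonneg_form[OF S'] z2])
  ultimately have "D (D x) = 0" by (simp add: D_def)
  then have "cinner (D x) (D x) = 0" using Dsa[of "D x" x] by (simp add: cinner_commute[of x])
  then have "D x = 0" by (simp add: cinner_self_eq_zero)
  then show ?thesis by (simp add: D_def)
qed

lemma sqrt_exists_unique:
  fixes A :: "'a::chilbert_space \<Rightarrow> 'a"
  assumes A: "positive_op A"
  shows "\<exists>!S. positive_op S \<and> S \<circ> S = A"
proof -
  obtain S where S: "positive_op S" "\<And>x. S (S x) = A x"
    and comm: "\<And>C x. bounded_clinear C \<Longrightarrow> (\<And>x. C (A x) = A (C x)) \<Longrightarrow> C (S x) = S (C x)"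
    using positive_sqrt_exists[OF A] by blast
  have "S' = S" if S': "positive_op S'" "S' \<circ> S' = A" for S'
  proof
    fix x
    have "S' (S' y) = S (S y)" for y using S'(2) S(2) by (metis comp_apply)
    moreover have "S' (A y) = A (S' y)" for y using S'(2) by (metis comp_apply)
    then have "S' (S y) = S (S' y)" for y by (rule comm[OF positive_op_bcl[OF S'(1)]])
    ultimately show "S' x = S x" by (rule commuting_positive_sqrt_unique[OF S'(1) S(1)])
  qed
  moreover have "S \<circ> S = A" using S(2) by auto
  ultimately show ?thesis using S(1) by blast
qed

lemma positive_op_sqrt_op: "positive_op A \<Longrightarrow> positive_op (sqrt_op A)"
  and sqrt_op_sqrt_op: "positive_op A \<Longrightarrow> sqrt_op A (sqrt_op A x) = A x"
  for A :: "'a::chilbert_space \<Rightarrow> 'a"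
  using theI'[OF sqrt_exists_unique, of A] unfolding sqrt_op_def by (auto simp: fun_eq_iff)

section \<open>The uniform boundedness principle\<close>

lemma closed_cover_has_interior:
  fixes E :: "nat \<Rightarrow> 'a::{metric_space,complete_space} set"
  assumes closed: "\<And>n. closed (E n)" and cover: "\<Union>(range E) = UNIV"
  shows "\<exists>n. interior (E n) \<noteq> {}"
proof (rule ccontr)
  assume no_interior: "\<not> ?thesis"
  have "euclidean interior_of \<Union>(range E) = {}"
  proof (rule Baire_category_alt)
    show "completely_metrizable_space (euclidean::'a topology)
        \<or> locally_compact_space (euclidean::'a topology) \<and> regular_space (euclidean::'a topology)"
      using completely_metrizable_space_euclidean by blast
    show "countable (range E)" by simp
    fix T assume "T \<in> range E"
    then obtain m where m: "T = E m" by blast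
    have "closedin euclidean (E m)" using closed[of m] closed_closedin by blast
    moreover have "interior (E m) = {}" using no_interior by blast
    ultimately show "closedin euclidean T \<and> euclidean interior_of T = {}" using m by simp
  qed
  then show False using cover by simp
qed

lemma bounded_linear_bound_of_ball:
  fixes F :: "'a::real_normed_vector \<Rightarrow> 'b::real_normed_vector"
  assumes F: "bounded_linear F" and r: "r > 0" and ball: "\<And>z. z \<in> ball x0 r \<Longrightarrow> norm (F z) \<le> c"
  shows "norm (F x) \<le> 4 * c / r * norm x"
proof -
  interpret F: bounded_linear F by (rule F)
  show ?thesis
  proof (cases "x = 0")
    case True then show ?thesis by (simp add: F.zero)
  next
    case False
    define t where "t = r / (2 * norm x)"
    have t: "t > 0" using r False by (simp add: t_def)
    define z where "z = x0 + scaleR t x"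
    have "dist x0 z = r / 2" using False r by (simp add: z_def dist_norm t_def)
    then have "norm (F z) \<le> c" "norm (F x0) \<le> c" using r by (auto intro: ball)
    moreover have "F z - F x0 = scaleR t (F x)" by (simp add: z_def F.add F.scaleR)
    then have "t * norm (F x) = norm (F z - F x0)" using t by simp
    ultimately have "t * norm (F x) \<le> 2 * c" using norm_triangle_ineq4[of "F z" "F x0"] by linarith
    then have "norm (F x) \<le> 2 * c / t" using t by (simp add: field_simps)
    also have "2 * c / t = 4 * c / r * norm x" using r False by (simp add: t_def field_simps)
    finally show ?thesis .
  qed
qed

lemma uniform_boundedness:
  fixes F :: "'i \<Rightarrow> 'a::{real_normed_vector,complete_space} \<Rightarrow> 'b::real_normed_vector"
  assumes bl: "\<And>i. i \<in> I \<Longrightarrow> bounded_linear (F i)" and pb: "\<And>x. \<exists>B. \<forall>i\<in>I. norm (F i x) \<le> B"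
  shows "\<exists>C. \<forall>i\<in>I. \<forall>x. norm (F i x) \<le> C * norm x"
proof -
  define E where "E n = {x. \<forall>i\<in>I. norm (F i x) \<le> real n}" for n :: nat
  have "closed (E n)" for n
  proof -
    have "closed {x. norm (F i x) \<le> real n}" if "i \<in> I" for i
      using bounded_linear.continuous_on[OF bl[OF that] continuous_on_id]
      by (intro closed_Collect_le continuous_on_norm continuous_on_const)
    moreover have "E n = (\<Inter>i\<in>I. {x. norm (F i x) \<le> real n})" by (auto simp: E_def)
    ultimately show ?thesis by (auto intro: closed_INT)
  qed
  moreover have "\<Union>(range E) = UNIV"
  proof (intro set_eqI iffI)
    fix x
    obtain B where "\<forall>i\<in>I. norm (F i x) \<le> B" using pb by blast
    moreover have "B \<le> real (nat \<lceil>B\<rceil>)" by (rule real_nat_ceiling_ge)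
    ultimately have "x \<in> E (nat \<lceil>B\<rceil>)" unfolding E_def by force
    then show "x \<in> \<Union>(range E)" by blast
  qed simp
  ultimately obtain n x0 where "x0 \<in> interior (E n)"
    using closed_cover_has_interior by blast
  then obtain r where r: "r > 0" "ball x0 r \<subseteq> E n" using mem_interior by blast
  show ?thesis
  proof (intro exI[of _ "4 * real n / r"] ballI allI)
    fix i x assume i: "i \<in> I"
    show "norm (F i x) \<le> 4 * real n / r * norm x"
      by (rule bounded_linear_bound_of_ball[OF bl[OF i] r(1)]) (use r(2) i in \<open>auto simp: E_def\<close>)
  qed
qed

lemma bounded_clinear_of_unit_bound:
  assumes D: "clinear D" and unit: "\<And>x. norm x \<le> 1 \<Longrightarrow> norm (D x) \<le> C"
  shows "bounded_clinear D"
proof (rule bounded_clinearI[OF D, where K=C])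
  fix x
  show "norm (D x) \<le> norm x * C"
  proof (cases "x = 0")
    case True then show ?thesis by (simp add: clinear_zero[OF D])
  next
    case False
    define u where "u = scaleC (complex_of_real (1 / norm x)) x"
    have "norm (D u) \<le> C" using False by (intro unit) (simp add: u_def norm_divide)
    moreover have "D x = scaleC (complex_of_real (norm x)) (D u)"
      using False by (simp add: u_def clinear_scaleC[OF D] scaleC_scaleC flip: of_real_mult)
    ultimately show ?thesis by (simp add: mult_left_mono)
  qed
qed

lemma bounded_clinear_of_weakly_bounded:
  fixes D :: "'a::chilbert_space \<Rightarrow> 'a"
  assumes D: "clinear D" and weak: "\<And>y. \<exists>C. \<forall>x. cmod (cinner (D x) y) \<le> C * norm x"
  shows "bounded_clinear D"
proof -
  define F where "F x y = cinner y (D x)" for x y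
  have "\<exists>C. \<forall>x\<in>{x. norm x \<le> 1}. \<forall>y. norm (F x y) \<le> C * norm y"
  proof (rule uniform_boundedness)
    show "bounded_linear (F x)" for x unfolding F_def[abs_def] by (rule bounded_linear_cinner_left)
    fix y
    obtain C where C: "\<And>x. cmod (cinner (D x) y) \<le> C * norm x" using weak[of y] by blast
    have "norm (F x y) \<le> \<bar>C\<bar>" if "norm x \<le> 1" for x
    proof -
      have "norm (F x y) = cmod (cinner (D x) y)" by (simp add: F_def cinner_commute[of y])
      also have "\<dots> \<le> C * norm x" by (rule C)
      also have "\<dots> \<le> \<bar>C\<bar> * 1" using that by (intro mult_mono) auto
      finally show ?thesis by simp
    qed
    then show "\<exists>B. \<forall>x\<in>{x. norm x \<le> 1}. norm (F x y) \<le> B" by blast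
  qed
  then obtain C0 where C0: "\<And>x y. norm x \<le> 1 \<Longrightarrow> norm (F x y) \<le> C0 * norm y" by auto
  define C where "C = max C0 0"
  have unit: "norm (D x) \<le> C" if "norm x \<le> 1" for x
  proof -
    have "norm (D x) * norm (D x) = norm (F x (D x))"
      by (simp add: F_def cinner_self power2_eq_square norm_mult)
    also have "\<dots> \<le> C * norm (D x)"
      using C0[OF that, of "D x"] mult_right_mono[of C0 C "norm (D x)"] by (simp add: C_def)
    finally show ?thesis by (rule le_of_mult_self_le[rotated]) (simp add: C_def)
  qed
  show ?thesis by (rule bounded_clinear_of_unit_bound[OF D unit])
qed

section \<open>Operators on a closed subspace\<close>

instance chilbert_space \<subseteq> banach ..

text \<open>\<open>opnorm_on M K\<close> is the norm of \<open>K\<close> as an operator on \<open>M\<close>; it is only meaningful for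
  \<open>M \<noteq> {0}\<close>, which the locale below assumes.\<close>

definition opnorm_on :: "'a::complex_inner set \<Rightarrow> ('a \<Rightarrow> 'a) \<Rightarrow> real" where
  "opnorm_on M K = Sup {norm (K x) | x. x \<in> M \<and> norm x = 1}"

definition op_on :: "'a::complex_inner set \<Rightarrow> ('a \<Rightarrow> 'a) \<Rightarrow> bool" where
  "op_on M K \<longleftrightarrow> bounded_clinear K \<and> (\<forall>x\<in>M. K x \<in> M)"

lemma op_on_into: "op_on M K \<Longrightarrow> x \<in> M \<Longrightarrow> K x \<in> M" by (simp add: op_on_def)

lemma norm_le_Sup_unit_image:
  assumes K: "clinear K" and X: "\<And>c z. z \<in> X \<Longrightarrow> scaleC c z \<in> X"
    and bdd: "bdd_above {norm (K z) | z. z \<in> X \<and> norm z = 1}" and z: "z \<in> X"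
  shows "norm (K z) \<le> Sup {norm (K z) | z. z \<in> X \<and> norm z = 1} * norm z"
proof (cases "z = 0")
  case True then show ?thesis by (simp add: clinear_zero[OF K])
next
  case False
  define u where "u = scaleC (complex_of_real (1 / norm z)) z"
  have "norm u = 1" using False by (simp add: u_def norm_divide)
  then have "norm (K u) \<le> Sup {norm (K z) | z. z \<in> X \<and> norm z = 1}"
    using X[OF z] bdd by (intro cSup_upper) (auto simp: u_def)
  moreover have "K z = scaleC (complex_of_real (norm z)) (K u)"
    using False by (simp add: u_def clinear_scaleC[OF K] scaleC_scaleC flip: of_real_mult)
  ultimately show ?thesis by (simp add: mult_left_mono mult.commute)
qed

locale nonzero_closed_csubspace =
  fixes M :: "'a::chilbert_space set"
  assumes M_csubspace: "csubspace M" and M_closed: "closed M" and M_nz: "\<exists>x\<in>M. x \<noteq> 0"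
begin

lemma exists_unit_in_M: "\<exists>u\<in>M. norm u = 1"
proof -
  obtain x where x: "x \<in> M" "x \<noteq> 0" using M_nz by blast
  define u where "u = scaleC (complex_of_real (1 / norm x)) x"
  have "u \<in> M" using x M_csubspace by (simp add: u_def csubspace_scaleC)
  moreover have "norm u = 1" using x by (simp add: u_def norm_divide)
  ultimately show ?thesis by blast
qed

lemma bdd_above_opnorm_on_set:
  assumes K: "bounded_clinear K"
  shows "bdd_above {norm (K x) | x. x \<in> M \<and> norm x = 1}"
proof -
  obtain C where C: "\<And>x. norm (K x) \<le> norm x * C" using bounded_clinear_bound[OF K] by blast
  show ?thesis
  proof (rule bdd_aboveI[of _ C])
    fix y assume "y \<in> {norm (K x) | x. x \<in> M \<and> norm x = 1}"
    then obtain x where "y = norm (K x)" "norm x = 1" by blast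
    then show "y \<le> C" using C[of x] by simp
  qed
qed

lemma opnorm_on_set_nonempty: "{norm (K x) | x. x \<in> M \<and> norm x = 1} \<noteq> {}"
  using exists_unit_in_M by blast

lemma opnorm_on_unit: "bounded_clinear K \<Longrightarrow> u \<in> M \<Longrightarrow> norm u = 1 \<Longrightarrow> norm (K u) \<le> opnorm_on M K"
  unfolding opnorm_on_def by (rule cSup_upper) (auto intro: bdd_above_opnorm_on_set)

lemma opnorm_on_bound:
  assumes K: "bounded_clinear K" and x: "x \<in> M"
  shows "norm (K x) \<le> opnorm_on M K * norm x"
  unfolding opnorm_on_def
  by (rule norm_le_Sup_unit_image[OF bounded_clinear_clinear[OF K] csubspace_scaleC[OF M_csubspace]
        bdd_above_opnorm_on_set[OF K] x])

lemma opnorm_on_nonneg: "bounded_clinear K \<Longrightarrow> 0 \<le> opnorm_on M K"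
  using exists_unit_in_M opnorm_on_unit by (meson norm_ge_zero order_trans)

lemma opnorm_on_le:
  assumes K: "bounded_clinear K" and b: "\<And>x. x \<in> M \<Longrightarrow> norm (K x) \<le> c * norm x"
  shows "opnorm_on M K \<le> c"
  unfolding opnorm_on_def
proof (rule cSup_least)
  show "{norm (K x) | x. x \<in> M \<and> norm x = 1} \<noteq> {}" by (rule opnorm_on_set_nonempty)
  fix y assume "y \<in> {norm (K x) | x. x \<in> M \<and> norm x = 1}"
  then obtain x where "y = norm (K x)" "x \<in> M" "norm x = 1" by blast
  then show "y \<le> c" using b[of x] by simp
qed

lemma op_on_id: "op_on M (\<lambda>x. x)" by (simp add: op_on_def bounded_clinear_id)

lemma op_on_comp: "op_on M K \<Longrightarrow> op_on M K' \<Longrightarrow> op_on M (\<lambda>x. K (K' x))"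
  by (simp add: op_on_def bounded_clinear_compose)

lemma op_on_funpow:
  assumes K: "op_on M K" shows "op_on M (K ^^ n)"
  unfolding op_on_def
proof (intro conjI)
  show "bounded_clinear (K ^^ n)" using K by (simp add: op_on_def bounded_clinear_funpow)
  show "\<forall>x\<in>M. (K ^^ n) x \<in> M" using K by (induct n) (auto simp: op_on_def)
qed

lemma op_on_scaleC: "op_on M K \<Longrightarrow> op_on M (\<lambda>x. scaleC c (K x))"
  by (simp add: op_on_def bounded_clinear_scaleC_comp csubspace_scaleC[OF M_csubspace])

lemma op_on_plus: "op_on M K \<Longrightarrow> op_on M K' \<Longrightarrow> op_on M (\<lambda>x. K x + K' x)"
  by (simp add: op_on_def bounded_clinear_plus csubspace_add[OF M_csubspace])

lemma op_on_minus: "op_on M K \<Longrightarrow> op_on M K' \<Longrightarrow> op_on M (\<lambda>x. K x - K' x)"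
  by (simp add: op_on_def bounded_clinear_sub csubspace_diff[OF M_csubspace])

lemma op_on_zero: "op_on M (\<lambda>x. 0)"
  by (simp add: op_on_def csubspace_0[OF M_csubspace]) (intro bounded_clinearI[where K=0] clinearI; simp)

lemma opnorm_on_triangle:
  assumes "bounded_clinear K" "bounded_clinear K'"
  shows "opnorm_on M K \<le> opnorm_on M K' + opnorm_on M (\<lambda>x. K x - K' x)"
proof (rule opnorm_on_le[OF assms(1)])
  fix x assume x: "x \<in> M"
  have "norm (K x) \<le> norm (K' x) + norm (K x - K' x)" by (rule norm_triangle_sub)
  also have "\<dots> \<le> opnorm_on M K' * norm x + opnorm_on M (\<lambda>x. K x - K' x) * norm x"
    by (intro add_mono opnorm_on_bound[OF assms(2) x] opnorm_on_bound[OF bounded_clinear_sub[OF assms] x, simplified])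
  finally show "norm (K x) \<le> (opnorm_on M K' + opnorm_on M (\<lambda>x. K x - K' x)) * norm x" by (simp add: algebra_simps)
qed

lemma opnorm_on_adjoint_le:
  assumes K: "op_on M K" and K': "op_on M K'"
    and adj: "\<And>x y. x \<in> M \<Longrightarrow> y \<in> M \<Longrightarrow> cinner (K x) y = cinner x (K' y)"
  shows "opnorm_on M K' \<le> opnorm_on M K"
proof (rule opnorm_on_le)
  show Kb': "bounded_clinear K'" using K' by (simp add: op_on_def)
  have Kb: "bounded_clinear K" using K by (simp add: op_on_def)
  fix z assume z: "z \<in> M"
  have w: "K' z \<in> M" by (rule op_on_into[OF K' z])
  have "norm (K' z) * norm (K' z) = Re (cinner (K (K' z)) z)"
    by (simp add: adj[OF w z] norm_sq_cinner[symmetric] power2_eq_square)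
  also have "\<dots> \<le> norm (K (K' z)) * norm z" using complex_Re_le_cmod norm_cinner_le order_trans by blast
  also have "\<dots> \<le> (opnorm_on M K * norm (K' z)) * norm z"
    by (intro mult_right_mono opnorm_on_bound[OF Kb w]) auto
  finally have "norm (K' z) * norm (K' z) \<le> (opnorm_on M K * norm z) * norm (K' z)"
    by (simp add: mult_ac)
  then show "norm (K' z) \<le> opnorm_on M K * norm z"
    by (rule le_of_mult_self_le[rotated]) (simp add: opnorm_on_nonneg[OF Kb])
qed

lemma opnorm_on_adjoint_eq:
  assumes K: "op_on M K" and K': "op_on M K'"
    and adj: "\<And>x y. x \<in> M \<Longrightarrow> y \<in> M \<Longrightarrow> cinner (K x) y = cinner x (K' y)"
  shows "opnorm_on M K' = opnorm_on M K"
proof (rule antisym)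
  show "opnorm_on M K' \<le> opnorm_on M K" by (rule opnorm_on_adjoint_le[OF K K' adj])
  have "cinner (K' x) y = cinner x (K y)" if "x \<in> M" "y \<in> M" for x y
    using adj[OF that(2,1)] by (metis cinner_commute)
  then show "opnorm_on M K \<le> opnorm_on M K'" by (rule opnorm_on_adjoint_le[OF K' K])
qed

lemma opnorm_on_eq_Sup_dense:
  assumes K: "bounded_clinear K" and X: "X \<subseteq> M" "M \<subseteq> closure X" "\<And>c z. z \<in> X \<Longrightarrow> scaleC c z \<in> X"
  shows "opnorm_on M K = Sup {norm (K z) | z. z \<in> X \<and> norm z = 1}"
    (is "_ = Sup ?N")
proof (rule antisym)
  have bdd: "bdd_above ?N"
    using X(1) opnorm_on_unit[OF K] by (intro bdd_aboveI[of _ "opnorm_on M K"]) auto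
  obtain z where z: "z \<in> X" "z \<noteq> 0"
  proof -
    have "\<not> X \<subseteq> {0}" using X(2) M_nz closure_minimal[of X "{0}"] by auto
    then show ?thesis using that by blast
  qed
  then have "scaleC (complex_of_real (1 / norm z)) z \<in> X" by (intro X(3))
  moreover have "norm (scaleC (complex_of_real (1 / norm z)) z) = 1" using z by (simp add: norm_divide)
  ultimately have ne: "?N \<noteq> {}" by blast
  have le: "norm (K z) \<le> Sup ?N * norm z" if "z \<in> X" for z
    by (rule norm_le_Sup_unit_image[OF bounded_clinear_clinear[OF K] X(3) bdd that])
  show "opnorm_on M K \<le> Sup ?N"
  proof (rule opnorm_on_le[OF K])
    fix x assume "x \<in> M"
    then obtain f where f: "\<And>k. f k \<in> X" "f \<longlonglongrightarrow> x"
      using X(2) closure_sequential by blast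
    have "(\<lambda>k. norm (K (f k))) \<longlonglongrightarrow> norm (K x)" by (intro tendsto_norm bounded_clinear_tendsto[OF K f(2)])
    moreover have "(\<lambda>k. Sup ?N * norm (f k)) \<longlonglongrightarrow> Sup ?N * norm x" by (intro tendsto_intros f(2))
    ultimately show "norm (K x) \<le> Sup ?N * norm x" using le f(1) by (intro LIMSEQ_le) auto
  qed
  show "Sup ?N \<le> opnorm_on M K"
    using ne X(1) opnorm_on_unit[OF K] by (intro cSup_least) auto
qed


end

section \<open>Neumann series\<close>

lemma funpow_sums_fixpoint:
  assumes K: "bounded_linear K" and s: "(\<lambda>n. (K ^^ n) x) sums s"
  shows "s - K s = x"
proof -
  have "(\<lambda>n. (K ^^ Suc n) x) sums K s" using bounded_linear.sums[OF K s] by simp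
  then have "(\<lambda>n. (K ^^ n) x - (K ^^ Suc n) x) sums (s - K s)" by (rule sums_diff[OF s])
  moreover have "(\<lambda>n. (K ^^ n) x - (K ^^ Suc n) x) sums x"
    using telescope_sums'[OF summable_LIMSEQ_zero[OF sums_summable[OF s]]] by simp
  ultimately show ?thesis by (rule sums_unique2)
qed

context nonzero_closed_csubspace
begin

lemma norm_funpow_le:
  assumes K: "op_on M K" and q: "0 \<le> q" and b: "\<And>x. x \<in> M \<Longrightarrow> norm (K x) \<le> q * norm x"
  shows "x \<in> M \<Longrightarrow> norm ((K ^^ n) x) \<le> q ^ n * norm x"
proof (induct n)
  case 0 then show ?case by simp
next
  case (Suc n)
  have "norm ((K ^^ Suc n) x) = norm (K ((K ^^ n) x))" by simp
  also have "\<dots> \<le> q * norm ((K ^^ n) x)" by (rule b[OF op_on_into[OF op_on_funpow[OF K] Suc.prems]])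
  also have "\<dots> \<le> q * (q ^ n * norm x)" by (intro mult_left_mono Suc.hyps[OF Suc.prems] q)
  finally show ?case by (simp add: mult.assoc)
qed

lemma neumann_norm_bound:
  assumes K: "op_on M K" and q: "0 \<le> q" "q < 1" and b: "\<And>x. x \<in> M \<Longrightarrow> norm (K x) \<le> q * norm x"
    and x: "x \<in> M"
  shows "summable (\<lambda>n. norm ((K ^^ n) x))" "(\<Sum>n. norm ((K ^^ n) x)) \<le> norm x / (1 - q)"
proof -
  have geo: "summable (\<lambda>n. q ^ n * norm x)" using q by (intro summable_mult2 summable_geometric) simp
  have le: "norm ((K ^^ n) x) \<le> q ^ n * norm x" for n by (rule norm_funpow_le[OF K q(1) b x])
  show "summable (\<lambda>n. norm ((K ^^ n) x))" by (rule summable_comparison_test[OF _ geo]) (use le in auto)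
  then have "(\<Sum>n. norm ((K ^^ n) x)) \<le> (\<Sum>n. q ^ n * norm x)" by (intro suminf_le le geo)
  also have "\<dots> = norm x / (1 - q)"
    using sums_mult2[OF geometric_sums, of q "norm x"] q by (simp add: sums_iff)
  finally show "(\<Sum>n. norm ((K ^^ n) x)) \<le> norm x / (1 - q)" .
qed

lemma summable_neumann:
  assumes K: "op_on M K" and q: "0 \<le> q" "q < 1" and b: "\<And>x. x \<in> M \<Longrightarrow> norm (K x) \<le> q * norm x"
  shows "summable (\<lambda>n. (K ^^ n) (orth_proj M x))"
  using neumann_norm_bound(1)[OF K q b orth_proj_mem[OF M_csubspace M_closed]] by (rule summable_norm_cancel)

lemma bounded_clinear_neumann_sum:
  assumes K: "op_on M K" and q: "0 \<le> q" "q < 1" and b: "\<And>x. x \<in> M \<Longrightarrow> norm (K x) \<le> q * norm x"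
  shows "bounded_clinear (\<lambda>x. \<Sum>n. (K ^^ n) (orth_proj M x))"
proof (rule bounded_clinearI)
  let ?P = "orth_proj M"
  have Pb: "bounded_clinear ?P" and PM: "\<And>x. ?P x \<in> M"
    using orth_proj_bcl[OF M_csubspace M_closed] orth_proj_mem[OF M_csubspace M_closed] by auto
  have Knb: "\<And>n. bounded_clinear (K ^^ n)"
    using K by (simp add: op_on_def bounded_clinear_funpow)
  note summ = summable_neumann[OF K q b]
  show "clinear (\<lambda>x. \<Sum>n. (K ^^ n) (?P x))"
  proof (rule clinearI)
    fix x y
    show "(\<Sum>n. (K ^^ n) (?P (x + y))) = (\<Sum>n. (K ^^ n) (?P x)) + (\<Sum>n. (K ^^ n) (?P y))"
      using suminf_add[OF summ[of x] summ[of y]]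
      by (simp add: bounded_clinear_add[OF Pb] bounded_clinear_add[OF Knb])
  next
    fix a x
    show "(\<Sum>n. (K ^^ n) (?P (scaleC a x))) = scaleC a (\<Sum>n. (K ^^ n) (?P x))"
      using bounded_linear.suminf[OF bounded_bilinear.bounded_linear_right[OF bounded_bilinear_scaleC] summ]
      by (simp add: bounded_clinear_scaleC[OF Pb] bounded_clinear_scaleC[OF Knb])
  qed
  fix x
  have "norm (\<Sum>n. (K ^^ n) (?P x)) \<le> (\<Sum>n. norm ((K ^^ n) (?P x)))"
    by (rule summable_norm[OF neumann_norm_bound(1)[OF K q b PM]])
  also have "\<dots> \<le> norm (?P x) / (1 - q)" by (rule neumann_norm_bound(2)[OF K q b PM])
  also have "\<dots> \<le> norm x / (1 - q)"
    using q by (intro divide_right_mono orth_proj_norm[OF M_csubspace M_closed]) auto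
  finally show "norm (\<Sum>n. (K ^^ n) (?P x)) \<le> norm x * (1 / (1 - q))" by simp
qed

lemma neumann_series:
  assumes K: "op_on M K" and q: "0 \<le> q" "q < 1" and b: "\<And>x. x \<in> M \<Longrightarrow> norm (K x) \<le> q * norm x"
  shows "\<exists>R. op_on M R \<and> (\<forall>x\<in>M. R (x - K x) = x \<and> R x - K (R x) = x \<and> (\<lambda>n. (K ^^ n) x) sums R x)"
proof -
  define R where "R x = (\<Sum>n. (K ^^ n) (orth_proj M x))" for x
  have Rb: "bounded_clinear R"
    unfolding R_def[abs_def] by (rule bounded_clinear_neumann_sum[OF K q b])
  have Kb: "bounded_clinear K" using K by (simp add: op_on_def)
  have Rsums: "(\<lambda>n. (K ^^ n) x) sums R x" if "x \<in> M" for x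
    using summable_sums[OF summable_neumann[OF K q b, of x]] by (simp add: R_def orth_proj_id[OF M_csubspace M_closed that])
  have RM: "R x \<in> M" if "x \<in> M" for x
  proof -
    have "(\<lambda>n. \<Sum>i<n. (K ^^ i) x) \<longlonglongrightarrow> R x" using Rsums[OF that] by (simp add: sums_def)
    moreover have "\<forall>n. (\<Sum>i<n. (K ^^ i) x) \<in> M"
      using op_on_into[OF op_on_funpow[OF K] that] by (auto intro: csubspace_sum[OF M_csubspace])
    ultimately show ?thesis
      using closed_sequentially[OF M_closed, of "\<lambda>n. \<Sum>i<n. (K ^^ i) x" "R x"] by blast
  qed
  have right: "R x - K (R x) = x" if "x \<in> M" for x
    by (rule funpow_sums_fixpoint[OF bounded_clinear_linear[OF Kb] Rsums[OF that]])
  have "R (K x) = K (R x)" if x: "x \<in> M" for x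
  proof -
    have "(\<lambda>n. (K ^^ n) (K x)) sums K (R x)"
      using bounded_linear.sums[OF bounded_clinear_linear[OF Kb] Rsums[OF x]] by (simp add: funpow_swap1)
    then show ?thesis using Rsums[OF op_on_into[OF K x]] sums_unique2 by blast
  qed
  then have "R (x - K x) = x" if "x \<in> M" for x
    using right[OF that] that by (simp add: bounded_clinear_diff[OF Rb])
  then show ?thesis using Rb RM right Rsums by (auto simp: op_on_def)
qed

lemma invertible_onI:
  assumes R1: "op_on M R1" and R2: "op_on M R2"
    and right: "\<And>x. x \<in> M \<Longrightarrow> E (R1 x) = x" and left: "\<And>x. x \<in> M \<Longrightarrow> R2 (E x) = x"
  shows "invertible_on M E"
proof -
  have eq: "R2 x = R1 x" if "x \<in> M" for x
    using left[OF op_on_into[OF R1 that]] right[OF that] by simp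
  have R2b: "bounded_clinear R2" using R2 by (simp add: op_on_def)
  obtain C where C: "\<And>x. norm (R2 x) \<le> norm x * C" using bounded_clinear_bound[OF R2b] by blast
  show ?thesis
    unfolding invertible_on_def
  proof (intro exI[of _ R2] conjI ballI allI)
    show "R2 ` M \<subseteq> M" using R2 by (auto simp: op_on_def)
    show "\<exists>K. \<forall>x\<in>M. norm (R2 x) \<le> norm x * K" using C by blast
    fix x assume x: "x \<in> M"
    show "R2 (E x) = x" by (rule left[OF x])
    show "E (R2 x) = x" using eq[OF x] right[OF x] by simp
  next
    fix x y assume "x \<in> M" "y \<in> M"
    show "R2 (x + y) = R2 x + R2 y" by (rule bounded_clinear_add[OF R2b])
  next
    fix a x assume "x \<in> M"
    show "R2 (scaleC a x) = scaleC a (R2 x)" by (rule bounded_clinear_scaleC[OF R2b])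
  qed
qed

lemma invertible_onD:
  assumes "invertible_on M E" and EM: "\<And>x. x \<in> M \<Longrightarrow> E x \<in> M"
  shows "\<exists>R. op_on M R \<and> (\<forall>x\<in>M. R (E x) = x \<and> E (R x) = x)"
proof -
  obtain R C where R: "R ` M \<subseteq> M" "\<forall>x\<in>M. \<forall>y\<in>M. R (x + y) = R x + R y"
      "\<forall>a. \<forall>x\<in>M. R (scaleC a x) = scaleC a (R x)" "\<forall>x\<in>M. norm (R x) \<le> norm x * C"
      "\<forall>x\<in>M. R (E x) = x \<and> E (R x) = x"
    using assms unfolding invertible_on_def by blast
  let ?P = "orth_proj M"
  have Pb: "bounded_clinear ?P" and PM: "\<And>x. ?P x \<in> M" and Pid: "\<And>x. x \<in> M \<Longrightarrow> ?P x = x"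
    using orth_proj_bcl[OF M_csubspace M_closed] orth_proj_mem[OF M_csubspace M_closed] orth_proj_id[OF M_csubspace M_closed] by auto
  define R' where "R' x = R (?P x)" for x
  have "bounded_clinear R'"
  proof (rule bounded_clinearI[where K="max C 0"])
    show "clinear R'"
      by (rule clinearI) (simp_all add: R'_def bounded_clinear_add[OF Pb] bounded_clinear_scaleC[OF Pb] R PM)
    fix x
    have "norm (R' x) \<le> norm (?P x) * C" using R(4) PM by (simp add: R'_def)
    also have "\<dots> \<le> norm (?P x) * max C 0" by (intro mult_left_mono) auto
    also have "\<dots> \<le> norm x * max C 0" by (intro mult_right_mono orth_proj_norm[OF M_csubspace M_closed]) auto
    finally show "norm (R' x) \<le> norm x * max C 0" .
  qed
  moreover have "\<forall>x\<in>M. R' x \<in> M" using R(1) PM by (auto simp: R'_def)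
  moreover have "\<forall>x\<in>M. R' (E x) = x \<and> E (R' x) = x"
  proof
    fix x assume x: "x \<in> M"
    have "E x \<in> M" using EM[OF x] .
    then show "R' (E x) = x \<and> E (R' x) = x" using R(5) x by (simp add: R'_def Pid)
  qed
  ultimately show ?thesis by (auto simp: op_on_def)
qed

end


section \<open>Spectrum and powers\<close>

text \<open>\<open>pow_diff_quot l L n = (\<Sum>k<n. l\<^bsup>n-1-k\<^esup> L\<^sup>k)\<close>, the quotient \<open>(l\<^sup>n - L\<^sup>n) / (l - L)\<close>.\<close>

primrec pow_diff_quot :: "complex \<Rightarrow> ('a::complex_inner \<Rightarrow> 'a) \<Rightarrow> nat \<Rightarrow> 'a \<Rightarrow> 'a" where
  "pow_diff_quot l L 0 = (\<lambda>x. 0)"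
| "pow_diff_quot l L (Suc n) = (\<lambda>x. scaleC l (pow_diff_quot l L n x) + (L ^^ n) x)"

lemma eventually_in_ball_dist_small:
  fixes \<mu>0 :: complex
  assumes "\<mu>0 \<in> ball 0 \<rho>"
  shows "eventually (\<lambda>\<mu>. \<mu> \<in> ball 0 \<rho> \<and> cmod (\<mu> - \<mu>0) * c \<le> 1/2) (at \<mu>0)"
proof -
  have "((\<lambda>\<mu>. cmod (\<mu> - \<mu>0) * c) \<longlongrightarrow> cmod (\<mu>0 - \<mu>0) * c) (at \<mu>0)"
    by (intro tendsto_intros)
  then have "eventually (\<lambda>\<mu>. cmod (\<mu> - \<mu>0) * c < 1/2) (at \<mu>0)"
    by (rule order_tendstoD) simp
  moreover have "eventually (\<lambda>\<mu>. \<mu> \<in> ball 0 \<rho>) (at \<mu>0)"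
    using assms by (intro eventually_at_in_open') auto
  ultimately show ?thesis by eventually_elim auto
qed

locale subspace_op = nonzero_closed_csubspace +
  fixes L :: "'a::chilbert_space \<Rightarrow> 'a"
  assumes op_on_L: "op_on M L"
begin

lemma L_bcl: "bounded_clinear L" using op_on_L by (simp add: op_on_def)
lemma L_in_M: "x \<in> M \<Longrightarrow> L x \<in> M" using op_on_L by (simp add: op_on_def)
lemma bounded_clinear_L_pow: "bounded_clinear (L ^^ n)" by (rule bounded_clinear_funpow[OF L_bcl])

definition shifted :: "complex \<Rightarrow> 'a \<Rightarrow> 'a" where "shifted l x = scaleC l x - L x"

lemma op_on_shifted: "op_on M (shifted l)"
proof -
  have "op_on M (\<lambda>x. scaleC l x - L x)"
    by (rule op_on_minus[OF op_on_scaleC[OF op_on_id] op_on_L])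
  then show ?thesis by (simp add: shifted_def[abs_def])
qed

lemma bounded_clinear_shifted: "bounded_clinear (shifted l)" using op_on_shifted by (simp add: op_on_def)

lemma op_on_pow_diff_quot: "op_on M (pow_diff_quot l L n)"
proof (induct n)
  case 0 then show ?case by (simp add: op_on_zero)
next
  case (Suc n)
  have "op_on M (\<lambda>x. scaleC l (pow_diff_quot l L n x) + (L ^^ n) x)"
    by (rule op_on_plus[OF op_on_scaleC[OF Suc] op_on_funpow[OF op_on_L]])
  then show ?case by simp
qed

lemma shifted_pow_diff_quot: "shifted l (pow_diff_quot l L n x) = scaleC (l ^ n) x - (L ^^ n) x"
proof (induct n)
  case 0 then show ?case by (simp add: shifted_def bounded_clinear_zero[OF L_bcl])
next
  case (Suc n)
  have "shifted l (pow_diff_quot l L (Suc n) x) = scaleC l (shifted l (pow_diff_quot l L n x)) + shifted l ((L ^^ n) x)"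
    by (simp add: bounded_clinear_add[OF bounded_clinear_shifted] bounded_clinear_scaleC[OF bounded_clinear_shifted])
  also have "\<dots> = scaleC l (scaleC (l ^ n) x - (L ^^ n) x) + (scaleC l ((L ^^ n) x) - (L ^^ Suc n) x)"
    unfolding Suc by (simp add: shifted_def)
  also have "\<dots> = scaleC (l ^ Suc n) x - (L ^^ Suc n) x"
    by (simp add: scaleC_diff_right scaleC_scaleC)
  finally show ?case .
qed

lemma pow_diff_quot_shifted: "pow_diff_quot l L n (shifted l x) = scaleC (l ^ n) x - (L ^^ n) x"
proof (induct n)
  case 0 then show ?case by simp
next
  case (Suc n)
  have "pow_diff_quot l L (Suc n) (shifted l x) = scaleC l (pow_diff_quot l L n (shifted l x)) + (L ^^ n) (shifted l x)" by simp
  also have "\<dots> = scaleC l (scaleC (l ^ n) x - (L ^^ n) x) + (scaleC l ((L ^^ n) x) - (L ^^ n) (L x))"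
    unfolding Suc by (simp add: shifted_def bounded_clinear_diff[OF bounded_clinear_L_pow] bounded_clinear_scaleC[OF bounded_clinear_L_pow])
  also have "(L ^^ n) (L x) = (L ^^ Suc n) x" by (simp add: funpow_swap1)
  also have "scaleC l (scaleC (l ^ n) x - (L ^^ n) x) + (scaleC l ((L ^^ n) x) - (L ^^ Suc n) x)
      = scaleC (l ^ Suc n) x - (L ^^ Suc n) x"
    by (simp add: scaleC_diff_right scaleC_scaleC)
  finally show ?case .
qed

lemma spectrum_on_iff: "l \<in> spectrum_on M L \<longleftrightarrow> \<not> invertible_on M (shifted l)"
  by (simp add: spectrum_on_def shifted_def[abs_def])

lemma invertible_on_shifted_of_pow:
  assumes W: "op_on M W" and left: "\<And>x. x \<in> M \<Longrightarrow> W (scaleC (l ^ n) x - (L ^^ n) x) = x"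
    and right: "\<And>x. x \<in> M \<Longrightarrow> scaleC (l ^ n) (W x) - (L ^^ n) (W x) = x"
  shows "invertible_on M (shifted l)"
proof (rule invertible_onI)
  show "op_on M (\<lambda>x. pow_diff_quot l L n (W x))" by (rule op_on_comp[OF op_on_pow_diff_quot W])
  show "op_on M (\<lambda>x. W (pow_diff_quot l L n x))" by (rule op_on_comp[OF W op_on_pow_diff_quot])
  show "shifted l (pow_diff_quot l L n (W x)) = x" if "x \<in> M" for x
    using right[OF that] by (simp add: shifted_pow_diff_quot)
  show "W (pow_diff_quot l L n (shifted l x)) = x" if "x \<in> M" for x
    using left[OF that] by (simp add: pow_diff_quot_shifted)
qed

lemma invertible_on_of_opnorm_pow_less:
  assumes n: "n \<ge> 1" and less: "opnorm_on M (L ^^ n) < cmod l ^ n"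
  shows "invertible_on M (shifted l)"
proof -
  have nn: "0 \<le> opnorm_on M (L ^^ n)" by (rule opnorm_on_nonneg[OF bounded_clinear_L_pow])
  have lpos: "0 < cmod l ^ n" using nn less by linarith
  then have ln0: "l ^ n \<noteq> 0" by (simp flip: norm_power)
  define c where "c = 1 / l ^ n"
  define K where "K x = scaleC c ((L ^^ n) x)" for x
  define q where "q = opnorm_on M (L ^^ n) / cmod l ^ n"
  have q: "0 \<le> q" "q < 1" using nn less lpos by (auto simp: q_def)
  have Kops: "op_on M K"
    unfolding K_def[abs_def] by (rule op_on_scaleC[OF op_on_funpow[OF op_on_L]])
  have Kb: "norm (K x) \<le> q * norm x" if "x \<in> M" for x
  proof -
    have "norm (K x) = norm ((L ^^ n) x) / cmod l ^ n" by (simp add: K_def c_def norm_divide norm_power)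
    also have "\<dots> \<le> opnorm_on M (L ^^ n) * norm x / cmod l ^ n"
      by (intro divide_right_mono opnorm_on_bound[OF bounded_clinear_L_pow that]) (use lpos in simp)
    finally show ?thesis by (simp add: q_def)
  qed
  obtain W where W: "op_on M W" "\<And>x. x \<in> M \<Longrightarrow> W (x - K x) = x" "\<And>x. x \<in> M \<Longrightarrow> W x - K (W x) = x"
    using neumann_series[OF Kops q Kb] by blast
  have cl: "c * l ^ n = 1" "l ^ n * c = 1" using ln0 by (simp_all add: c_def)
  show ?thesis
  proof (rule invertible_on_shifted_of_pow[of "\<lambda>x. W (scaleC c x)"])
    show "op_on M (\<lambda>x. W (scaleC c x))" by (rule op_on_comp[OF W(1) op_on_scaleC[OF op_on_id]])
    fix x assume x: "x \<in> M"
    have cx: "scaleC c x \<in> M" using x by (rule csubspace_scaleC[OF M_csubspace])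
    show "W (scaleC c (scaleC (l ^ n) x - (L ^^ n) x)) = x"
      using W(2)[OF x] by (simp add: scaleC_diff_right scaleC_scaleC cl K_def)
    have "scaleC (l ^ n) (W (scaleC c x)) - (L ^^ n) (W (scaleC c x))
        = scaleC (l ^ n) (W (scaleC c x) - K (W (scaleC c x)))"
      by (simp add: K_def scaleC_diff_right scaleC_scaleC cl)
    then show "scaleC (l ^ n) (W (scaleC c x)) - (L ^^ n) (W (scaleC c x)) = x"
      using W(3)[OF cx] by (simp add: scaleC_scaleC cl)
  qed
qed

lemma cmod_pow_le_opnorm_pow:
  assumes "l \<in> spectrum_on M L" "n \<ge> 1"
  shows "cmod l ^ n \<le> opnorm_on M (L ^^ n)"
  using invertible_on_of_opnorm_pow_less[OF assms(2)] assms(1) by (force simp: spectrum_on_iff)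

section \<open>The resolvent\<close>

text \<open>The resolvent is taken in the variable \<open>\<mu> = 1 / \<lambda>\<close>: \<open>is_resolvent \<mu> R\<close> says that \<open>R\<close>
  inverts \<open>I - \<mu> L\<close> on \<open>M\<close>.  It exists on the disc \<open>\<bar>\<mu>\<bar> < 1 / r(L)\<close>, is holomorphic there and
  has the Taylor coefficients \<open>L\<^sup>n\<close> at \<open>0\<close>, so Cauchy's inequality bounds \<open>\<parallel>L\<^sup>n\<parallel>\<close>.\<close>

definition is_resolvent :: "complex \<Rightarrow> ('a \<Rightarrow> 'a) \<Rightarrow> bool" where
  "is_resolvent \<mu> R \<longleftrightarrow> op_on M R \<and> (\<forall>x\<in>M. R (x - scaleC \<mu> (L x)) = x \<and> R x - scaleC \<mu> (L (R x)) = x)"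

definition resolvent :: "complex \<Rightarrow> 'a \<Rightarrow> 'a" where "resolvent \<mu> = (SOME R. is_resolvent \<mu> R)"

lemma is_resolvent_bcl: "is_resolvent \<mu> R \<Longrightarrow> bounded_clinear R" by (simp add: is_resolvent_def op_on_def)
lemma is_resolvent_in_M: "is_resolvent \<mu> R \<Longrightarrow> x \<in> M \<Longrightarrow> R x \<in> M" by (simp add: is_resolvent_def op_on_def)
lemma is_resolvent_left: "is_resolvent \<mu> R \<Longrightarrow> x \<in> M \<Longrightarrow> R (x - scaleC \<mu> (L x)) = x" by (simp add: is_resolvent_def)
lemma is_resolvent_right: "is_resolvent \<mu> R \<Longrightarrow> x \<in> M \<Longrightarrow> R x - scaleC \<mu> (L (R x)) = x" by (simp add: is_resolvent_def)

lemma is_resolvent_unique: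
  assumes "is_resolvent \<mu> R" "is_resolvent \<mu> R'" "x \<in> M"
  shows "R x = R' x"
proof -
  have "R' (R x - scaleC \<mu> (L (R x))) = R x" by (rule is_resolvent_left[OF assms(2) is_resolvent_in_M[OF assms(1,3)]])
  then show ?thesis using is_resolvent_right[OF assms(1,3)] by simp
qed

lemma is_resolvent_resolvent: assumes "\<exists>R. is_resolvent \<mu> R" shows "is_resolvent \<mu> (resolvent \<mu>)"
  unfolding resolvent_def using someI_ex[OF assms] .

lemma is_resolvent_0: "is_resolvent 0 (\<lambda>x. x)"
  by (simp add: is_resolvent_def op_on_id)

lemma is_resolvent_of_inverse_notin_spectrum:
  assumes \<mu>: "\<mu> \<noteq> 0" and ns: "inverse \<mu> \<notin> spectrum_on M L"
  shows "\<exists>R. is_resolvent \<mu> R"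
proof -
  have "invertible_on M (shifted (inverse \<mu>))" using ns by (simp add: spectrum_on_iff)
  then obtain R0 where R0: "op_on M R0" "\<And>x. x \<in> M \<Longrightarrow> R0 (shifted (inverse \<mu>) x) = x"
      "\<And>x. x \<in> M \<Longrightarrow> shifted (inverse \<mu>) (R0 x) = x"
    using invertible_onD[of "shifted (inverse \<mu>)"] op_on_into[OF op_on_shifted] by blast
  have R0b: "bounded_clinear R0" using R0(1) by (simp add: op_on_def)
  define R where "R x = scaleC (inverse \<mu>) (R0 x)" for x
  have "is_resolvent \<mu> R"
    unfolding is_resolvent_def
  proof (intro conjI ballI)
    have "op_on M (\<lambda>x. scaleC (inverse \<mu>) (R0 x))" by (rule op_on_scaleC[OF R0(1)])
    then show "op_on M R" by (simp add: R_def[abs_def])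
    fix x assume x: "x \<in> M"
    have "x - scaleC \<mu> (L x) = scaleC \<mu> (shifted (inverse \<mu>) x)"
      using \<mu> by (simp add: shifted_def scaleC_diff_right scaleC_scaleC)
    then show "R (x - scaleC \<mu> (L x)) = x"
      using \<mu> by (simp add: R_def bounded_clinear_scaleC[OF R0b] R0(2)[OF x] scaleC_scaleC)
    have "R x - scaleC \<mu> (L (R x)) = shifted (inverse \<mu>) (R0 x)"
      using \<mu> by (simp add: R_def shifted_def bounded_clinear_scaleC[OF L_bcl] scaleC_scaleC)
    then show "R x - scaleC \<mu> (L (R x)) = x" using R0(3)[OF x] by simp
  qed
  then show ?thesis by blast
qed

lemma funpow_scaleC_L: "((\<lambda>v. scaleC \<mu> (L v)) ^^ n) x = scaleC (\<mu> ^ n) ((L ^^ n) x)"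
proof (induct n)
  case 0 then show ?case by simp
next
  case (Suc n)
  show ?case by (simp add: Suc bounded_clinear_scaleC[OF L_bcl] scaleC_scaleC)
qed

lemma is_resolvent_neumann:
  assumes sm: "cmod \<mu> * opnorm_on M L < 1"
  shows "\<exists>R. is_resolvent \<mu> R \<and> (\<forall>x\<in>M. (\<lambda>n. scaleC (\<mu> ^ n) ((L ^^ n) x)) sums R x)"
proof -
  define K where "K v = scaleC \<mu> (L v)" for v
  have Kops: "op_on M K"
  proof -
    have "op_on M (\<lambda>v. scaleC \<mu> (L v))" by (rule op_on_scaleC[OF op_on_L])
    then show ?thesis by (simp add: K_def[abs_def])
  qed
  have q: "0 \<le> cmod \<mu> * opnorm_on M L" by (simp add: opnorm_on_nonneg[OF L_bcl])
  have Kb: "norm (K x) \<le> (cmod \<mu> * opnorm_on M L) * norm x" if "x \<in> M" for x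
    using opnorm_on_bound[OF L_bcl that] by (simp add: K_def mult.assoc mult_left_mono)
  obtain R where R: "op_on M R" "\<forall>x\<in>M. R (x - K x) = x \<and> R x - K (R x) = x \<and> (\<lambda>n. (K ^^ n) x) sums R x"
    using neumann_series[OF Kops q sm Kb] by blast
  have Kp: "(K ^^ n) x = scaleC (\<mu> ^ n) ((L ^^ n) x)" for n x
    using funpow_scaleC_L[where \<mu>=\<mu> and n=n and x=x] by (simp add: K_def[abs_def])
  have "is_resolvent \<mu> R" using R by (simp add: is_resolvent_def K_def)
  moreover have "\<forall>x\<in>M. (\<lambda>n. scaleC (\<mu> ^ n) ((L ^^ n) x)) sums R x" using R(2) by (simp add: Kp)
  ultimately show ?thesis by blast
qed

lemma resolvent_identity:
  assumes R0: "is_resolvent \<mu>0 R0" and R: "is_resolvent \<mu> R" and x: "x \<in> M"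
  shows "R x - R0 x = scaleC (\<mu> - \<mu>0) (R (L (R0 x)))"
proof -
  define y where "y = R0 x"
  have yM: "y \<in> M" using is_resolvent_in_M[OF R0 x] by (simp add: y_def)
  have Rb: "bounded_clinear R" by (rule is_resolvent_bcl[OF R])
  have "x = y - scaleC \<mu>0 (L y)" using is_resolvent_right[OF R0 x] by (simp add: y_def)
  also have "\<dots> = (y - scaleC \<mu> (L y)) + scaleC (\<mu> - \<mu>0) (L y)" by (simp add: scaleC_diff_left)
  finally have "R x = R (y - scaleC \<mu> (L y)) + scaleC (\<mu> - \<mu>0) (R (L y))"
    by (simp add: bounded_clinear_add[OF Rb] bounded_clinear_scaleC[OF Rb])
  also have "R (y - scaleC \<mu> (L y)) = y" by (rule is_resolvent_left[OF R yM])
  finally show ?thesis by (simp add: y_def)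
qed

lemma norm_resolvent_L_resolvent_le:
  assumes R0: "is_resolvent \<mu>0 R0" and R: "is_resolvent \<mu> R" and x: "x \<in> M"
  shows "norm (R (L (R0 x))) \<le> opnorm_on M R * (opnorm_on M L * (opnorm_on M R0 * norm x))"
proof -
  have Rb: "bounded_clinear R" by (rule is_resolvent_bcl[OF R])
  have R0xM: "R0 x \<in> M" by (rule is_resolvent_in_M[OF R0 x])
  have "norm (R (L (R0 x))) \<le> opnorm_on M R * norm (L (R0 x))"
    by (rule opnorm_on_bound[OF Rb L_in_M[OF R0xM]])
  also have "\<dots> \<le> opnorm_on M R * (opnorm_on M L * norm (R0 x))"
    by (intro mult_left_mono opnorm_on_bound[OF L_bcl R0xM] opnorm_on_nonneg[OF Rb])
  also have "\<dots> \<le> opnorm_on M R * (opnorm_on M L * (opnorm_on M R0 * norm x))"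
    by (intro mult_left_mono opnorm_on_bound[OF is_resolvent_bcl[OF R0] x] opnorm_on_nonneg[OF Rb]
        opnorm_on_nonneg[OF L_bcl])
  finally show ?thesis .
qed

lemma opnorm_on_resolvent_le:
  assumes R0: "is_resolvent \<mu>0 R0" and R: "is_resolvent \<mu> R"
    and small: "cmod (\<mu> - \<mu>0) * opnorm_on M L * opnorm_on M R0 \<le> 1/2"
  shows "opnorm_on M R \<le> 2 * opnorm_on M R0"
proof -
  have Rb: "bounded_clinear R" by (rule is_resolvent_bcl[OF R])
  have "opnorm_on M R \<le> opnorm_on M R0 + opnorm_on M R / 2"
  proof (rule opnorm_on_le[OF Rb])
    fix x assume x: "x \<in> M"
    have "cmod (\<mu> - \<mu>0) * norm (R (L (R0 x)))
        \<le> (cmod (\<mu> - \<mu>0) * opnorm_on M L * opnorm_on M R0) * (opnorm_on M R * norm x)"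
      using mult_left_mono[OF norm_resolvent_L_resolvent_le[OF R0 R x], of "cmod (\<mu> - \<mu>0)"]
      by (simp add: mult_ac)
    also have "\<dots> \<le> (1/2) * (opnorm_on M R * norm x)"
      by (intro mult_right_mono small) (simp add: opnorm_on_nonneg[OF Rb])
    finally have "norm (R x) \<le> norm (R0 x) + (1/2) * (opnorm_on M R * norm x)"
      using norm_triangle_sub[of "R x" "R0 x"] resolvent_identity[OF R0 R x] by simp
    also have "\<dots> \<le> opnorm_on M R0 * norm x + (1/2) * (opnorm_on M R * norm x)"
      by (intro add_right_mono opnorm_on_bound[OF is_resolvent_bcl[OF R0] x])
    finally show "norm (R x) \<le> (opnorm_on M R0 + opnorm_on M R / 2) * norm x"
      by (simp add: algebra_simps)
  qed
  then show ?thesis by simp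
qed

lemma norm_resolvent_diff_le:
  assumes R0: "is_resolvent \<mu>0 R0" and R: "is_resolvent \<mu> R"
    and small: "cmod (\<mu> - \<mu>0) * opnorm_on M L * opnorm_on M R0 \<le> 1/2" and x: "x \<in> M"
  shows "norm (R x - R0 x)
    \<le> cmod (\<mu> - \<mu>0) * (2 * opnorm_on M R0 * opnorm_on M L * opnorm_on M R0) * norm x"
proof -
  have nn: "0 \<le> opnorm_on M L" "0 \<le> opnorm_on M R0"
    using opnorm_on_nonneg[OF L_bcl] opnorm_on_nonneg[OF is_resolvent_bcl[OF R0]] by auto
  have "norm (R x - R0 x) = cmod (\<mu> - \<mu>0) * norm (R (L (R0 x)))"
    by (simp add: resolvent_identity[OF R0 R x])
  also have "\<dots> \<le> cmod (\<mu> - \<mu>0) * (opnorm_on M R * (opnorm_on M L * (opnorm_on M R0 * norm x)))"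
    by (intro mult_left_mono norm_resolvent_L_resolvent_le[OF R0 R x]) simp
  also have "\<dots> \<le> cmod (\<mu> - \<mu>0) * ((2 * opnorm_on M R0) * (opnorm_on M L * (opnorm_on M R0 * norm x)))"
    using nn by (intro mult_left_mono mult_right_mono opnorm_on_resolvent_le[OF R0 R small]) auto
  finally show ?thesis by (simp add: mult_ac)
qed

lemma resolvent_inner_sums:
  assumes small: "cmod z * opnorm_on M L < 1" and x: "x \<in> M"
  shows "(\<lambda>n. cinner ((L ^^ n) x) y * z ^ n) sums cinner (resolvent z x) y"
proof -
  obtain R where R: "is_resolvent z R" "\<forall>x\<in>M. (\<lambda>n. scaleC (z ^ n) ((L ^^ n) x)) sums R x"
    using is_resolvent_neumann[OF small] by blast
  have "resolvent z x = R x" using is_resolvent_unique[OF is_resolvent_resolvent R(1) x] R(1) by blast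
  moreover have "(\<lambda>n. cinner (scaleC (z ^ n) ((L ^^ n) x)) y) sums cinner (R x) y"
    using bounded_linear.sums[OF bounded_linear_cinner_left R(2)[rule_format, OF x]] .
  ultimately show ?thesis by (simp add: cinner_scaleC_left mult.commute)
qed

lemma higher_deriv_resolvent_inner_0:
  assumes x: "x \<in> M"
  shows "(deriv ^^ n) (\<lambda>\<mu>. cinner (resolvent \<mu> x) y) 0 = fact n * cinner ((L ^^ n) x) y"
proof -
  define f where "f \<mu> = cinner (resolvent \<mu> x) y" for \<mu>
  define c where "c n = cinner ((L ^^ n) x) y" for n
  define F where "F = Abs_fps c"
  define \<delta> where "\<delta> = 1 / (opnorm_on M L + 1)"
  have nL: "0 \<le> opnorm_on M L" by (rule opnorm_on_nonneg[OF L_bcl])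
  have \<delta>: "\<delta> > 0" using nL by (simp add: \<delta>_def)
  have ser: "(\<lambda>n. c n * z ^ n) sums f z" if z: "z \<in> ball 0 \<delta>" for z
  proof -
    have "cmod z * opnorm_on M L \<le> \<delta> * opnorm_on M L" using z nL by (intro mult_right_mono) auto
    also have "\<delta> * opnorm_on M L < 1" using nL by (simp add: \<delta>_def field_simps)
    finally show ?thesis unfolding f_def c_def by (rule resolvent_inner_sums[OF _ x])
  qed
  define z0 where "z0 = complex_of_real (\<delta> / 2)"
  have z0: "z0 \<in> ball 0 \<delta>" using \<delta> by (simp add: z0_def)
  have "conv_radius c \<ge> norm z0"
    by (rule conv_radius_geI) (rule sums_summable[OF ser[OF z0]])
  then have cr: "ereal (\<delta> / 2) \<le> conv_radius c" using \<delta> by (simp add: z0_def)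
  have "0 < ereal (\<delta> / 2)" using \<delta> by simp
  then have "0 < conv_radius c" using cr by (rule order.strict_trans2)
  then have conv: "fps_conv_radius F > 0" by (simp add: F_def fps_conv_radius_def)
  have "eventually (\<lambda>z. z \<in> ball 0 \<delta>) (nhds (0::complex))"
    by (rule eventually_nhds_in_open) (use \<delta> in auto)
  then have "eventually (\<lambda>z. eval_fps F z = f z) (nhds 0)"
  proof (rule eventually_mono)
    fix z :: complex assume "z \<in> ball 0 \<delta>"
    then show "eval_fps F z = f z" using sums_unique[OF ser[OF \<open>z \<in> ball 0 \<delta>\<close>]] by (simp add: eval_fps_def F_def)
  qed
  then have "f has_fps_expansion F" using conv by (simp add: has_fps_expansion_def)
  then have "fps_nth F n = (deriv ^^ n) f 0 / fact n" by (rule fps_nth_fps_expansion)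
  then show ?thesis by (simp add: F_def c_def f_def[abs_def])
qed

lemma resolvent_inner_has_derivative:
  assumes dom: "\<And>\<mu>. \<mu> \<in> ball 0 \<rho> \<Longrightarrow> \<exists>R. is_resolvent \<mu> R" and \<mu>0: "\<mu>0 \<in> ball 0 \<rho>" and x: "x \<in> M"
  shows "((\<lambda>\<mu>. cinner (resolvent \<mu> x) y) has_field_derivative cinner (resolvent \<mu>0 (L (resolvent \<mu>0 x))) y) (at \<mu>0)"
proof -
  define R0 where "R0 = resolvent \<mu>0"
  have R0: "is_resolvent \<mu>0 R0" using is_resolvent_resolvent[OF dom[OF \<mu>0]] by (simp add: R0_def)
  define v where "v = L (R0 x)"
  have vM: "v \<in> M" using L_in_M[OF is_resolvent_in_M[OF R0 x]] by (simp add: v_def)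
  define K where "K = 2 * opnorm_on M R0 * opnorm_on M L * opnorm_on M R0"
  have ev: "eventually (\<lambda>\<mu>. \<mu> \<in> ball 0 \<rho> \<and> cmod (\<mu> - \<mu>0) * opnorm_on M L * opnorm_on M R0 \<le> 1/2) (at \<mu>0)"
    using eventually_in_ball_dist_small[OF \<mu>0, of "opnorm_on M L * opnorm_on M R0"] by (simp add: mult.assoc)
  have key: "norm ((cinner (resolvent \<mu> x) y - cinner (resolvent \<mu>0 x) y) / (\<mu> - \<mu>0) - cinner (resolvent \<mu>0 (L (resolvent \<mu>0 x))) y)
      \<le> cmod (\<mu> - \<mu>0) * (K * norm v * norm y)"
    if \<mu>: "\<mu> \<in> ball 0 \<rho>" "cmod (\<mu> - \<mu>0) * opnorm_on M L * opnorm_on M R0 \<le> 1/2" "\<mu> \<noteq> \<mu>0" for \<mu>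
  proof -
    have R: "is_resolvent \<mu> (resolvent \<mu>)" by (rule is_resolvent_resolvent[OF dom[OF \<mu>(1)]])
    have "cinner (resolvent \<mu> x) y - cinner (resolvent \<mu>0 x) y = cinner (resolvent \<mu> x - R0 x) y"
      by (simp add: cinner_diff_left R0_def)
    also have "\<dots> = (\<mu> - \<mu>0) * cinner (resolvent \<mu> v) y"
      by (simp add: resolvent_identity[OF R0 R x] cinner_scaleC_left v_def)
    finally have q: "(cinner (resolvent \<mu> x) y - cinner (resolvent \<mu>0 x) y) / (\<mu> - \<mu>0) = cinner (resolvent \<mu> v) y"
      using \<mu>(3) by simp
    have "norm (cinner (resolvent \<mu> v) y - cinner (R0 v) y) = norm (cinner (resolvent \<mu> v - R0 v) y)"
      by (simp add: cinner_diff_left)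
    also have "\<dots> \<le> norm (resolvent \<mu> v - R0 v) * norm y" by (rule norm_cinner_le)
    also have "\<dots> \<le> (cmod (\<mu> - \<mu>0) * K * norm v) * norm y"
      by (intro mult_right_mono norm_resolvent_diff_le[OF R0 R \<mu>(2) vM, folded K_def]) auto
    finally show ?thesis using q by (simp add: R0_def v_def mult_ac)
  qed
  have "((\<lambda>\<mu>. (cinner (resolvent \<mu> x) y - cinner (resolvent \<mu>0 x) y) / (\<mu> - \<mu>0) - cinner (resolvent \<mu>0 (L (resolvent \<mu>0 x))) y) \<longlongrightarrow> 0) (at \<mu>0)"
  proof (rule Lim_null_comparison)
    show "eventually (\<lambda>\<mu>. norm ((cinner (resolvent \<mu> x) y - cinner (resolvent \<mu>0 x) y) / (\<mu> - \<mu>0) - cinner (resolvent \<mu>0 (L (resolvent \<mu>0 x))) y)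
      \<le> cmod (\<mu> - \<mu>0) * (K * norm v * norm y)) (at \<mu>0)"
      using eventually_conj[OF ev eventually_neq_at_within[of \<mu>0 \<mu>0 UNIV]]
      by (rule eventually_mono) (use key in blast)
    have "((\<lambda>\<mu>. cmod (\<mu> - \<mu>0) * (K * norm v * norm y)) \<longlongrightarrow> cmod (\<mu>0 - \<mu>0) * (K * norm v * norm y)) (at \<mu>0)"
      by (intro tendsto_intros)
    then show "((\<lambda>\<mu>. cmod (\<mu> - \<mu>0) * (K * norm v * norm y)) \<longlongrightarrow> 0) (at \<mu>0)" by simp
  qed
  then show ?thesis by (simp add: has_field_derivative_iff Lim_null[symmetric])
qed

lemma resolvent_inner_holomorphic:
  assumes dom: "\<And>\<mu>. \<mu> \<in> ball 0 \<rho> \<Longrightarrow> \<exists>R. is_resolvent \<mu> R" and x: "x \<in> M"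
  shows "(\<lambda>\<mu>. cinner (resolvent \<mu> x) y) holomorphic_on ball 0 \<rho>"
  unfolding holomorphic_on_def field_differentiable_def
  using resolvent_inner_has_derivative[OF dom _ x] has_field_derivative_at_within by blast

lemma continuous_on_opnorm_resolvent:
  assumes dom: "\<And>\<mu>. \<mu> \<in> ball 0 \<rho> \<Longrightarrow> \<exists>R. is_resolvent \<mu> R"
  shows "continuous_on (ball 0 \<rho>) (\<lambda>\<mu>. opnorm_on M (resolvent \<mu>))"
  unfolding continuous_on_eq_continuous_at[OF open_ball]
proof
  fix \<mu>0 assume \<mu>0: "\<mu>0 \<in> ball (0::complex) \<rho>"
  define R0 where "R0 = resolvent \<mu>0"
  have R0: "is_resolvent \<mu>0 R0" using is_resolvent_resolvent[OF dom[OF \<mu>0]] by (simp add: R0_def)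
  define K where "K = 2 * opnorm_on M R0 * opnorm_on M L * opnorm_on M R0"
  have ev: "eventually (\<lambda>\<mu>. \<mu> \<in> ball 0 \<rho> \<and> cmod (\<mu> - \<mu>0) * opnorm_on M L * opnorm_on M R0 \<le> 1/2) (at \<mu>0)"
    using eventually_in_ball_dist_small[OF \<mu>0, of "opnorm_on M L * opnorm_on M R0"] by (simp add: mult.assoc)
  have key: "norm (opnorm_on M (resolvent \<mu>) - opnorm_on M (resolvent \<mu>0)) \<le> cmod (\<mu> - \<mu>0) * K"
    if \<mu>: "\<mu> \<in> ball 0 \<rho>" "cmod (\<mu> - \<mu>0) * opnorm_on M L * opnorm_on M R0 \<le> 1/2" for \<mu>
  proof -
    have R: "is_resolvent \<mu> (resolvent \<mu>)" by (rule is_resolvent_resolvent[OF dom[OF \<mu>(1)]])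
    have Rb: "bounded_clinear (resolvent \<mu>)" by (rule is_resolvent_bcl[OF R])
    have R0b: "bounded_clinear R0" by (rule is_resolvent_bcl[OF R0])
    have a: "opnorm_on M (\<lambda>x. resolvent \<mu> x - R0 x) \<le> cmod (\<mu> - \<mu>0) * K"
      by (rule opnorm_on_le[OF bounded_clinear_sub[OF Rb R0b]]) (use norm_resolvent_diff_le[OF R0 R \<mu>(2)] in \<open>simp add: K_def\<close>)
    have b: "opnorm_on M (\<lambda>x. R0 x - resolvent \<mu> x) \<le> cmod (\<mu> - \<mu>0) * K"
      by (rule opnorm_on_le[OF bounded_clinear_sub[OF R0b Rb]])
         (use norm_resolvent_diff_le[OF R0 R \<mu>(2)] in \<open>simp add: K_def norm_minus_commute\<close>)
    have "opnorm_on M (resolvent \<mu>) \<le> opnorm_on M R0 + cmod (\<mu> - \<mu>0) * K" using opnorm_on_triangle[OF Rb R0b] a by linarith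
    moreover have "opnorm_on M R0 \<le> opnorm_on M (resolvent \<mu>) + cmod (\<mu> - \<mu>0) * K" using opnorm_on_triangle[OF R0b Rb] b by linarith
    ultimately show ?thesis by (simp add: R0_def abs_le_iff)
  qed
  have "((\<lambda>\<mu>. opnorm_on M (resolvent \<mu>) - opnorm_on M (resolvent \<mu>0)) \<longlongrightarrow> 0) (at \<mu>0)"
  proof (rule Lim_null_comparison)
    show "eventually (\<lambda>\<mu>. norm (opnorm_on M (resolvent \<mu>) - opnorm_on M (resolvent \<mu>0)) \<le> cmod (\<mu> - \<mu>0) * K) (at \<mu>0)"
      using ev by (rule eventually_mono) (use key in blast)
    have "((\<lambda>\<mu>. cmod (\<mu> - \<mu>0) * K) \<longlongrightarrow> cmod (\<mu>0 - \<mu>0) * K) (at \<mu>0)"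
      by (intro tendsto_intros)
    then show "((\<lambda>\<mu>. cmod (\<mu> - \<mu>0) * K) \<longlongrightarrow> 0) (at \<mu>0)" by simp
  qed
  then show "isCont (\<lambda>\<mu>. opnorm_on M (resolvent \<mu>)) \<mu>0" by (simp add: isCont_def Lim_null[symmetric])
qed

lemma norm_pow_le_Cauchy:
  assumes dom: "\<And>\<mu>. \<mu> \<in> ball 0 \<rho> \<Longrightarrow> \<exists>R. is_resolvent \<mu> R" and r: "0 < r" "r < \<rho>"
    and B: "\<And>\<mu>. \<mu> \<in> sphere 0 r \<Longrightarrow> opnorm_on M (resolvent \<mu>) \<le> B" "0 \<le> B"
    and x: "x \<in> M"
  shows "norm ((L ^^ n) x) \<le> B / r ^ n * norm x"
proof -
  define y where "y = (L ^^ n) x"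
  define f where "f \<mu> = cinner (resolvent \<mu> x) y" for \<mu>
  have hol: "f holomorphic_on ball 0 \<rho>"
    unfolding f_def[abs_def] by (rule resolvent_inner_holomorphic[OF dom x])
  have bound: "norm (f \<mu>) \<le> B * norm x * norm y" if "norm (0 - \<mu>) = r" for \<mu>
  proof -
    have \<mu>: "\<mu> \<in> sphere 0 r" using that by simp
    have R: "is_resolvent \<mu> (resolvent \<mu>)" by (rule is_resolvent_resolvent[OF dom]) (use \<mu> r in auto)
    have "norm (f \<mu>) \<le> norm (resolvent \<mu> x) * norm y" unfolding f_def by (rule norm_cinner_le)
    also have "\<dots> \<le> (opnorm_on M (resolvent \<mu>) * norm x) * norm y"
      by (intro mult_right_mono opnorm_on_bound[OF is_resolvent_bcl[OF R] x]) auto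
    also have "\<dots> \<le> (B * norm x) * norm y" by (intro mult_right_mono B(1)[OF \<mu>]) auto
    finally show ?thesis .
  qed
  have "f holomorphic_on ball 0 r" by (rule holomorphic_on_subset[OF hol]) (use r in auto)
  moreover have "continuous_on (cball 0 r) f"
    by (rule continuous_on_subset[OF holomorphic_on_imp_continuous_on[OF hol]]) (use r in auto)
  ultimately have Cauchy: "norm ((deriv ^^ n) f 0) \<le> fact n * (B * norm x * norm y) / r ^ n"
    using r(1) bound by (rule Cauchy_inequality)
  have "(deriv ^^ n) f 0 = fact n * cinner y y"
    unfolding f_def[abs_def] y_def by (rule higher_deriv_resolvent_inner_0[OF x])
  then have "norm ((deriv ^^ n) f 0) = fact n * (norm y * norm y)"
    by (simp add: cinner_self norm_mult power2_eq_square del: of_real_power)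
  with Cauchy have "fact n * (norm y * norm y) \<le> fact n * ((B / r ^ n * norm x) * norm y)"
    by (simp add: field_simps)
  then have "norm y * norm y \<le> (B / r ^ n * norm x) * norm y"
    by (rule mult_le_cancel_left_pos[THEN iffD1, OF fact_gt_zero])
  then have "norm y \<le> B / r ^ n * norm x"
    by (rule le_of_mult_self_le[rotated]) (use B(2) r in simp)
  then show ?thesis by (simp add: y_def)
qed

lemma opnorm_pow_Cauchy_estimate:
  assumes dom: "\<And>\<mu>. \<mu> \<in> ball 0 \<rho> \<Longrightarrow> \<exists>R. is_resolvent \<mu> R" and r: "0 < r" "r < \<rho>"
  shows "\<exists>B. \<forall>n. opnorm_on M (L ^^ n) \<le> B / r ^ n"
proof -
  have sph: "sphere (0::complex) r \<subseteq> ball 0 \<rho>" using r by auto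
  have "compact ((\<lambda>\<mu>. opnorm_on M (resolvent \<mu>)) ` sphere 0 r)"
    by (rule compact_continuous_image[OF continuous_on_subset[OF continuous_on_opnorm_resolvent[OF dom] sph]
          compact_sphere])
  then obtain B1 where B1: "\<And>\<mu>. \<mu> \<in> sphere 0 r \<Longrightarrow> norm (opnorm_on M (resolvent \<mu>)) \<le> B1"
    using compact_imp_bounded bounded_iff by (metis image_eqI)
  then have B: "opnorm_on M (resolvent \<mu>) \<le> max B1 0" if "\<mu> \<in> sphere 0 r" for \<mu>
    using B1[OF that] by (simp add: abs_le_iff)
  have "opnorm_on M (L ^^ n) \<le> max B1 0 / r ^ n" for n
  proof (rule opnorm_on_le[OF bounded_clinear_L_pow])
    show "norm ((L ^^ n) x) \<le> max B1 0 / r ^ n * norm x" if "x \<in> M" for x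
      by (rule norm_pow_le_Cauchy[OF dom r B max.cobounded2 that])
  qed
  then show ?thesis by blast
qed

section \<open>Gelfand's spectral radius formula\<close>

lemma cmod_le_opnorm_if_spectrum: "l \<in> spectrum_on M L \<Longrightarrow> cmod l \<le> opnorm_on M L"
  using cmod_pow_le_opnorm_pow[of l 1] by simp

lemma is_resolvent_in_ball:
  assumes less: "\<And>l. l \<in> spectrum_on M L \<Longrightarrow> cmod l < t" and t: "t > 0" and \<mu>: "\<mu> \<in> ball 0 (1 / t)"
  shows "\<exists>R. is_resolvent \<mu> R"
proof (cases "\<mu> = 0")
  case True then show ?thesis using is_resolvent_0 by blast
next
  case False
  have "t < 1 / cmod \<mu>" using \<mu> t False by (simp add: field_simps)
  then have "inverse \<mu> \<notin> spectrum_on M L" using less by (force simp: norm_inverse divide_inverse)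
  then show ?thesis by (rule is_resolvent_of_inverse_notin_spectrum[OF False])
qed

lemma norm_le_pow_mult_norm_funpow:
  assumes c: "0 \<le> c" and below: "\<And>x. x \<in> M \<Longrightarrow> norm x \<le> c * norm (L x)" and x: "x \<in> M"
  shows "norm x \<le> c ^ n * norm ((L ^^ n) x)"
proof (induct n)
  case 0 then show ?case by simp
next
  case (Suc n)
  have "norm ((L ^^ n) x) \<le> c * norm (L ((L ^^ n) x))"
    by (rule below[OF op_on_into[OF op_on_funpow[OF op_on_L] x]])
  then have "c ^ n * norm ((L ^^ n) x) \<le> c ^ n * (c * norm (L ((L ^^ n) x)))"
    using c by (intro mult_left_mono) auto
  then show ?case using Suc by (simp add: mult_ac)
qed

text \<open>If the spectrum were empty, \<open>L\<close> would be invertible, so \<open>\<parallel>x\<parallel> \<le> c\<^sup>n \<parallel>L\<^sup>n x\<parallel>\<close>, while the resolvent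
  would be entire and Cauchy's estimates on a circle of radius \<open>2c + 1\<close> would force
  \<open>c\<^sup>n \<parallel>L\<^sup>n\<parallel> \<longlonglongrightarrow> 0\<close>.\<close>

lemma spectrum_on_nonempty: "spectrum_on M L \<noteq> {}"
proof
  assume empty: "spectrum_on M L = {}"
  then have "0 \<notin> spectrum_on M L" by simp
  then have "invertible_on M (shifted 0)" by (simp add: spectrum_on_iff)
  then obtain R where R: "op_on M R" "\<And>x. x \<in> M \<Longrightarrow> R (shifted 0 x) = x"
    using invertible_onD[of "shifted 0"] op_on_into[OF op_on_shifted] by blast
  have Rb: "bounded_clinear R" using R(1) by (simp add: op_on_def)
  define c where "c = opnorm_on M R"
  have c0: "0 \<le> c" by (simp add: c_def opnorm_on_nonneg[OF Rb])
  have below: "norm x \<le> c * norm (L x)" if "x \<in> M" for x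
  proof -
    have "norm x = norm (R (- L x))" using R(2)[OF that] by (simp add: shifted_def)
    also have "\<dots> \<le> c * norm (- L x)" unfolding c_def
      by (rule opnorm_on_bound[OF Rb]) (simp add: L_in_M that csubspace_minus[OF M_csubspace])
    finally show ?thesis by simp
  qed
  define r where "r = 2 * c + 1"
  have r: "0 < r" "r < 1 / (1 / (r + 1))" using c0 by (auto simp: r_def)
  have "\<exists>R. is_resolvent \<mu> R" if "\<mu> \<in> ball 0 (1 / (1 / (r + 1)))" for \<mu>
    using that r(1) by (intro is_resolvent_in_ball[of "1 / (r + 1)"]) (auto simp: empty)
  then obtain B where B: "\<And>n. opnorm_on M (L ^^ n) \<le> B / r ^ n"
    using opnorm_pow_Cauchy_estimate[OF _ r] by blast
  have "(\<lambda>n. B * (c / r) ^ n) \<longlonglongrightarrow> B * 0"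
    using c0 r by (intro tendsto_intros LIMSEQ_power_zero) (auto simp: r_def)
  then have "eventually (\<lambda>n. B * (c / r) ^ n < 1) sequentially" by (rule order_tendstoD) simp
  then obtain N where N: "B * (c / r) ^ N < 1" by (auto simp: eventually_sequentially)
  obtain x where x: "x \<in> M" "x \<noteq> 0" using M_nz by blast
  have "norm x \<le> c ^ N * norm ((L ^^ N) x)" by (rule norm_le_pow_mult_norm_funpow[OF c0 below x(1)])
  also have "\<dots> \<le> c ^ N * (opnorm_on M (L ^^ N) * norm x)"
    by (intro mult_left_mono opnorm_on_bound[OF bounded_clinear_L_pow x(1)]) (use c0 in simp)
  also have "\<dots> \<le> c ^ N * (B / r ^ N * norm x)"
    by (intro mult_left_mono mult_right_mono B) (use c0 in simp_all)
  also have "\<dots> = (B * (c / r) ^ N) * norm x" by (simp add: power_divide)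
  also have "\<dots> < 1 * norm x" using N x by (intro mult_strict_right_mono) auto
  finally show False by simp
qed

lemma bdd_above_spectrum_on: "bdd_above (cmod ` spectrum_on M L)"
  using cmod_le_opnorm_if_spectrum by (intro bdd_aboveI[of _ "opnorm_on M L"]) auto

lemma cmod_le_spec_rad_on: "l \<in> spectrum_on M L \<Longrightarrow> cmod l \<le> spec_rad_on M L"
  unfolding spec_rad_on_def by (rule cSup_upper) (auto intro: bdd_above_spectrum_on)

lemma spec_rad_on_nonneg: "0 \<le> spec_rad_on M L"
  using spectrum_on_nonempty cmod_le_spec_rad_on norm_ge_zero by (meson equals0I order_trans)

lemma ereal_spec_rad_on_le_SUP:
  assumes "spectrum_on M L \<subseteq> X"
  shows "ereal (spec_rad_on M L) \<le> (SUP l\<in>X. ereal (cmod l))"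
proof -
  define Y where "Y = (SUP l\<in>X. ereal (cmod l))"
  have up: "ereal (cmod l) \<le> Y" if "l \<in> spectrum_on M L" for l
    unfolding Y_def using assms that by (intro SUP_upper) auto
  obtain l0 where l0: "l0 \<in> spectrum_on M L" using spectrum_on_nonempty by blast
  show ?thesis
  proof (cases Y)
    case (real y)
    have "spec_rad_on M L \<le> y"
      unfolding spec_rad_on_def using up real by (intro cSup_least) (auto simp: spectrum_on_nonempty)
    then show ?thesis using real by (simp add: Y_def)
  next
    case PInf then show ?thesis by (simp add: Y_def)
  next
    case MInf then show ?thesis using up[OF l0] by simp
  qed
qed

lemma spec_rad_on_le_root_opnorm: "n \<ge> 1 \<Longrightarrow> spec_rad_on M L \<le> root n (opnorm_on M (L ^^ n))"
  unfolding spec_rad_on_def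
proof (rule cSup_least)
  show "cmod ` spectrum_on M L \<noteq> {}" using spectrum_on_nonempty by blast
  fix a assume n: "n \<ge> 1" and "a \<in> cmod ` spectrum_on M L"
  then obtain l where l: "l \<in> spectrum_on M L" "a = cmod l" by blast
  have "cmod l = root n (cmod l ^ n)" using n by (simp add: real_root_power_cancel)
  also have "\<dots> \<le> root n (opnorm_on M (L ^^ n))"
    using n cmod_pow_le_opnorm_pow[OF l(1) n] by (intro real_root_le_mono) auto
  finally show "a \<le> root n (opnorm_on M (L ^^ n))" using l by simp
qed

lemma opnorm_pow_le_geometric:
  assumes u: "spec_rad_on M L < u"
  shows "\<exists>B>0. \<forall>n. opnorm_on M (L ^^ n) \<le> B * u ^ n"
proof -
  define t where "t = (spec_rad_on M L + u) / 2"
  have t: "0 < t" "t < u" using spec_rad_on_nonneg u by (auto simp: t_def)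
  have less: "cmod l < t" if "l \<in> spectrum_on M L" for l
    using cmod_le_spec_rad_on[OF that] u by (simp add: t_def)
  have r: "0 < 1 / u" "1 / u < 1 / t" using t by (auto simp: field_simps)
  obtain B where B: "\<And>n. opnorm_on M (L ^^ n) \<le> B / (1 / u) ^ n"
    using opnorm_pow_Cauchy_estimate[OF is_resolvent_in_ball[OF less t(1)] r] by blast
  have "opnorm_on M (L ^^ n) \<le> max B 1 * u ^ n" for n
    using B[of n] t by (simp add: power_one_over) (meson max.cobounded1 mult_right_mono order_trans
        zero_le_power less_imp_le order.strict_trans)
  then show ?thesis by (intro exI[of _ "max B 1"]) auto
qed

lemma eventually_root_opnorm_le:
  assumes e: "e > 0"
  shows "eventually (\<lambda>n. root n (opnorm_on M (L ^^ n)) \<le> spec_rad_on M L + e) sequentially"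
proof -
  define u where "u = spec_rad_on M L + e / 2"
  have u: "u > 0" "spec_rad_on M L < u" using spec_rad_on_nonneg e by (auto simp: u_def)
  obtain B where B: "B > 0" "\<And>n. opnorm_on M (L ^^ n) \<le> B * u ^ n"
    using opnorm_pow_le_geometric[OF u(2)] by blast
  have "(\<lambda>n. root n B) \<longlonglongrightarrow> 1" by (rule LIMSEQ_root_const[OF B(1)])
  moreover have "1 < (spec_rad_on M L + e) / u" using u e by (simp add: u_def field_simps)
  ultimately have "eventually (\<lambda>n. root n B < (spec_rad_on M L + e) / u) sequentially"
    by (rule order_tendstoD)
  then show ?thesis
    using eventually_ge_at_top[of 1]
  proof eventually_elim
    case (elim n)
    have "root n (opnorm_on M (L ^^ n)) \<le> root n (B * u ^ n)"
      using elim B(2) by (simp add: real_root_le_mono)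
    also have "\<dots> = root n B * u" using elim u by (simp add: real_root_mult real_root_power_cancel)
    also have "\<dots> \<le> (spec_rad_on M L + e) / u * u" using elim u by (intro mult_right_mono) auto
    also have "\<dots> = spec_rad_on M L + e" using u by simp
    finally show ?case .
  qed
qed

theorem gelfand_formula: "(\<lambda>n. opnorm_on M (L ^^ n) powr (1 / real n)) \<longlonglongrightarrow> spec_rad_on M L"
proof -
  have eq: "eventually (\<lambda>n. root n (opnorm_on M (L ^^ n)) = opnorm_on M (L ^^ n) powr (1 / real n)) sequentially"
    using eventually_ge_at_top[of 1]
    by eventually_elim (simp add: root_powr_inverse opnorm_on_nonneg[OF bounded_clinear_L_pow])
  have lim: "(\<lambda>n. root n (opnorm_on M (L ^^ n))) \<longlonglongrightarrow> spec_rad_on M L"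
  proof (rule order_tendstoI)
    fix a assume a: "a < spec_rad_on M L"
    show "eventually (\<lambda>n. a < root n (opnorm_on M (L ^^ n))) sequentially"
      using eventually_ge_at_top[of 1] by eventually_elim (use a spec_rad_on_le_root_opnorm in force)
  next
    fix b assume b: "spec_rad_on M L < b"
    have "eventually (\<lambda>n. root n (opnorm_on M (L ^^ n)) \<le> spec_rad_on M L + (b - spec_rad_on M L) / 2)
        sequentially"
      by (rule eventually_root_opnorm_le) (use b in simp)
    then show "eventually (\<lambda>n. root n (opnorm_on M (L ^^ n)) < b) sequentially"
      by (rule eventually_mono) (use b in \<open>auto simp: field_simps\<close>)
  qed
  show ?thesis by (rule Lim_transform_eventually[OF lim eq])
qed

end


section \<open>The compression of \<open>T\<close> to the closure of the range of \<open>A\<close>\<close>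

locale semi_hilbertian =
  fixes A T :: "'a::chilbert_space \<Rightarrow> 'a"
  assumes A_pos: "positive_op A" and A_nz: "A \<noteq> (\<lambda>x. 0)" and T_B: "T \<in> BAhalf A"
begin

abbreviation "S \<equiv> sqrt_op A"
abbreviation "M \<equiv> closure (range A)"
abbreviation "P \<equiv> orth_proj M"
abbreviation "Ts \<equiv> adjoint T"

lemma A_bcl: "bounded_clinear A" using A_pos by (simp add: positive_op_def)
lemma S_pos: "positive_op S" using positive_op_sqrt_op[OF A_pos] .
lemma S_bcl: "bounded_clinear S" using S_pos by (simp add: positive_op_def)
lemma S_S: "S (S x) = A x" using sqrt_op_sqrt_op[OF A_pos] .
lemma S_sa: "cinner (S x) y = cinner x (S y)" by (rule positive_sa[OF S_pos])
lemma A_sa: "cinner (A x) y = cinner x (A y)" by (rule positive_sa[OF A_pos])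
lemma T_bcl: "bounded_clinear T" using T_B by (simp add: BAhalf_def)
lemma Ts_bcl: "bounded_clinear Ts" by (rule bounded_clinear_adjoint[OF T_bcl])
lemma Ts_S_in_range_S: "\<exists>w. Ts (S x) = S w"
  using T_B by (auto simp: BAhalf_def image_subset_iff)

lemma M_csubspace: "csubspace M"
  by (rule csubspace_closure[OF csubspace_range[OF bounded_clinear_clinear[OF A_bcl]]])
lemma M_closed: "closed M" by simp

lemmas M_closed_csubspace = M_csubspace M_closed

lemma P_bcl: "bounded_clinear P" by (rule orth_proj_bcl[OF M_closed_csubspace])
lemma P_in_M: "P x \<in> M" by (rule orth_proj_mem[OF M_closed_csubspace])
lemma P_id: "x \<in> M \<Longrightarrow> P x = x" by (rule orth_proj_id[OF M_closed_csubspace])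
lemma P_idem: "P (P x) = P x" by (rule P_id[OF P_in_M])
lemma P_sa: "cinner (P x) y = cinner x (P y)" by (rule orth_proj_selfadj[OF M_closed_csubspace])

lemma A_eq_0_iff_S_eq_0: "A x = 0 \<longleftrightarrow> S x = 0"
proof
  assume "A x = 0"
  then have "cinner (S x) (S x) = 0" using S_sa[of x "S x"] S_S[of x] by simp
  then show "S x = 0" by (simp add: cinner_self_eq_zero)
next
  assume "S x = 0" then have "S (S x) = 0" by (simp add: bounded_clinear_zero[OF S_bcl])
  then show "A x = 0" by (simp add: S_S)
qed

lemma orthogonal_M_iff: "(\<forall>m\<in>M. cinner y m = 0) \<longleftrightarrow> A y = 0"
proof
  assume h: "\<forall>m\<in>M. cinner y m = 0"
  have "A (A y) \<in> range A" by (rule rangeI)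
  then have "A (A y) \<in> M" by (rule subsetD[OF closure_subset])
  then have "cinner y (A (A y)) = 0" using h by blast
  then have "cinner (A y) (A y) = 0" using A_sa[of y "A y"] by simp
  then show "A y = 0" by (simp add: cinner_self_eq_zero)
next
  assume Ay: "A y = 0"
  have "range A \<subseteq> {m. cinner y m = 0}"
  proof
    fix m assume "m \<in> range A"
    then obtain x where "m = A x" by blast
    then show "m \<in> {m. cinner y m = 0}" using A_sa[of y x] Ay by simp
  qed
  moreover have "closed {m. cinner y m = 0}"
    by (rule closed_Collect_eq, rule bounded_linear.continuous_on[OF bounded_linear_cinner_right], rule continuous_on_id, rule continuous_on_const)
  ultimately have "M \<subseteq> {m. cinner y m = 0}" by (rule closure_minimal)
  then show "\<forall>m\<in>M. cinner y m = 0" by blast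
qed

lemma P_eq_0_iff: "P x = 0 \<longleftrightarrow> A x = 0"
  using orth_proj_zero_iff[OF M_closed_csubspace] orthogonal_M_iff by simp

lemma A_P: "A (P x) = A x"
proof -
  have "\<forall>m\<in>M. cinner (x - P x) m = 0" using orth_proj_orthogonal[OF M_closed_csubspace] by blast
  then have "A (x - P x) = 0" using orthogonal_M_iff by blast
  then show ?thesis by (simp add: bounded_clinear_diff[OF A_bcl])
qed

lemma S_P: "S (P x) = S x"
proof -
  have "A (x - P x) = 0" using A_P by (simp add: bounded_clinear_diff[OF A_bcl])
  then have "S (x - P x) = 0" using A_eq_0_iff_S_eq_0 by blast
  then show ?thesis by (simp add: bounded_clinear_diff[OF S_bcl])
qed

lemma mem_M_iff: "z \<in> M \<longleftrightarrow> (\<forall>y. A y = 0 \<longrightarrow> cinner z y = 0)"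
proof
  assume z: "z \<in> M"
  show "\<forall>y. A y = 0 \<longrightarrow> cinner z y = 0"
  proof (intro allI impI)
    fix y assume "A y = 0"
    then have "cinner y z = 0" using orthogonal_M_iff z by blast
    then show "cinner z y = 0" using cinner_commute[of z y] by simp
  qed
next
  assume h: "\<forall>y. A y = 0 \<longrightarrow> cinner z y = 0"
  define w where "w = z - P z"
  have "A w = 0" by (simp add: w_def bounded_clinear_diff[OF A_bcl] A_P)
  then have 1: "cinner z w = 0" using h by blast
  have 2: "cinner (P z) w = 0"
  proof -
    have "cinner w (P z) = 0" using orth_proj_orthogonal[OF M_closed_csubspace P_in_M] by (simp add: w_def)
    then show ?thesis using cinner_commute[of "P z" w] by simp
  qed
  have "cinner w w = cinner z w - cinner (P z) w" by (simp add: w_def cinner_diff_left)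
  then have "cinner w w = 0" using 1 2 by simp
  then have "w = 0" by (simp add: cinner_self_eq_zero)
  then show "z \<in> M" using P_in_M[of z] by (simp add: w_def)
qed

lemma S_in_M: "S x \<in> M"
  unfolding mem_M_iff
proof (intro allI impI)
  fix y assume "A y = 0"
  then have "S y = 0" using A_eq_0_iff_S_eq_0 by blast
  then show "cinner (S x) y = 0" by (simp add: S_sa)
qed

lemma A_in_SM: "A x \<in> S ` M"
  using S_S[of x] S_in_M[of x] by (metis image_eqI)

lemma M_sub_closure_SM: "M \<subseteq> closure (S ` M)"
proof -
  have "range A \<subseteq> S ` M" using A_in_SM by blast
  then show ?thesis by (rule closure_mono)
qed

lemma closure_range_S: "closure (range S) = M"
proof
  show "closure (range S) \<subseteq> M" using S_in_M by (intro closure_minimal) auto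
  have "S ` M \<subseteq> range S" by blast
  then have "closure (S ` M) \<subseteq> closure (range S)" by (rule closure_mono)
  then show "M \<subseteq> closure (range S)" using M_sub_closure_SM by blast
qed

lemma BAhalf_preserves_ker_A:
  assumes RB: "R \<in> BAhalf A" and z: "A z = 0"
  shows "A (R z) = 0"
proof -
  have Rb: "bounded_clinear R" using RB by (simp add: BAhalf_def)
  have Rr: "\<exists>w. adjoint R (S y) = S w" for y using RB by (auto simp: BAhalf_def image_subset_iff)
  have Sz: "S z = 0" using z A_eq_0_iff_S_eq_0 by blast
  have "cinner (S (R z)) y = 0" for y
  proof -
    obtain w where w: "adjoint R (S y) = S w" using Rr by blast
    have "cinner (S (R z)) y = cinner (R z) (S y)" by (rule S_sa)
    also have "\<dots> = cinner z (adjoint R (S y))" by (rule cinner_adjoint_right[OF Rb])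
    also have "\<dots> = cinner z (S w)" by (simp add: w)
    also have "\<dots> = cinner (S z) w" by (simp add: S_sa)
    finally show ?thesis using Sz by simp
  qed
  from this[of "S (R z)"] have "S (R z) = 0" by (simp add: cinner_self_eq_zero)
  then show ?thesis using A_eq_0_iff_S_eq_0 by blast
qed

lemma P_BAhalf_P:
  assumes RB: "R \<in> BAhalf A"
  shows "P (R (P x)) = P (R x)"
proof -
  have Rb: "bounded_clinear R" using RB by (simp add: BAhalf_def)
  have "A (x - P x) = 0" by (simp add: bounded_clinear_diff[OF A_bcl] A_P)
  then have "A (R (x - P x)) = 0" by (rule BAhalf_preserves_ker_A[OF RB])
  then have "P (R (x - P x)) = 0" using P_eq_0_iff by blast
  then show ?thesis by (simp add: bounded_clinear_diff[OF Rb] bounded_clinear_diff[OF P_bcl])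
qed

lemma P_eq_if_A_eq: "A u = A v \<Longrightarrow> P u = P v"
proof -
  assume "A u = A v"
  then have "A (u - v) = 0" by (simp add: bounded_clinear_diff[OF A_bcl])
  then have "P (u - v) = 0" using P_eq_0_iff by blast
  then show "P u = P v" by (simp add: bounded_clinear_diff[OF P_bcl])
qed

lemma Ts_in_M:
  assumes m: "m \<in> M"
  shows "Ts m \<in> M"
  unfolding mem_M_iff
proof (intro allI impI)
  fix y assume Ay: "A y = 0"
  from Ay have "A (T y) = 0" by (rule BAhalf_preserves_ker_A[OF T_B])
  then have "cinner m (T y) = 0" using m mem_M_iff by blast
  then show "cinner (Ts m) y = 0" by (simp add: cinner_adjoint_left[OF T_bcl])
qed

lemma Ts_pow_in_M: "m \<in> M \<Longrightarrow> (Ts ^^ n) m \<in> M"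
  by (induct n) (auto simp: Ts_in_M)

definition T_eff :: "'a \<Rightarrow> 'a" where "T_eff x = P (T (P x))"

lemma T_eff_bcl: "bounded_clinear T_eff"
proof -
  have "bounded_clinear (\<lambda>x. P (T (P x)))"
    by (rule bounded_clinear_compose[OF P_bcl bounded_clinear_compose[OF T_bcl P_bcl]])
  then show ?thesis by (simp add: T_eff_def[abs_def])
qed

lemma T_eff_in_M: "T_eff x \<in> M" by (simp add: T_eff_def P_in_M)

lemma T_eff_pow: "x \<in> M \<Longrightarrow> (T_eff ^^ n) x = P ((T ^^ n) x)"
proof (induct n)
  case 0 then show ?case by (simp add: P_id)
next
  case (Suc n)
  have "(T_eff ^^ Suc n) x = T_eff ((T_eff ^^ n) x)" by simp
  also have "\<dots> = T_eff (P ((T ^^ n) x))" using Suc.hyps[OF Suc.prems] by simp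
  also have "\<dots> = P (T (P (P ((T ^^ n) x))))" by (simp add: T_eff_def)
  also have "\<dots> = P (T ((T ^^ n) x))" by (simp add: P_idem P_BAhalf_P[OF T_B])
  finally show ?case by simp
qed

lemma cinner_T_eff_pow: "y \<in> M \<Longrightarrow> z \<in> M \<Longrightarrow> cinner ((T_eff ^^ n) y) z = cinner y ((Ts ^^ n) z)"
proof -
  assume y: "y \<in> M" and z: "z \<in> M"
  have "cinner ((T_eff ^^ n) y) z = cinner (P ((T ^^ n) y)) z" by (simp add: T_eff_pow y)
  also have "\<dots> = cinner ((T ^^ n) y) (P z)" by (rule P_sa)
  also have "\<dots> = cinner ((T ^^ n) y) z" by (simp add: P_id z)
  also have "\<dots> = cinner y ((Ts ^^ n) z)" by (rule cinner_funpow_adjoint[OF T_bcl])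
  finally show ?thesis .
qed

section \<open>The operator diamond\<close>

text \<open>By the range inclusion defining \<open>BAhalf A\<close>, \<open>T\<^sup>* S x = S w\<close> for some \<open>w\<close>; projecting \<open>w\<close>
  onto \<open>M\<close> makes it unique, as \<open>S\<close> is injective on \<open>M\<close>.\<close>

definition Tdia :: "'a \<Rightarrow> 'a" where "Tdia x = P (SOME w. Ts (S x) = S w)"

lemma S_Tdia: "S (Tdia x) = Ts (S x)"
proof -
  have "Ts (S x) = S (SOME w. Ts (S x) = S w)" using Ts_S_in_range_S[of x] by (rule someI_ex)
  then show ?thesis by (simp add: Tdia_def S_P)
qed

lemma Tdia_in_M: "Tdia x \<in> M" by (simp add: Tdia_def P_in_M)

lemma S_inj_on_M: "w1 \<in> M \<Longrightarrow> w2 \<in> M \<Longrightarrow> S w1 = S w2 \<Longrightarrow> w1 = w2"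
proof -
  assume w: "w1 \<in> M" "w2 \<in> M" "S w1 = S w2"
  define d where "d = w1 - w2"
  have dM: "d \<in> M" using w M_csubspace by (simp add: d_def csubspace_diff)
  have "S d = 0" using w by (simp add: d_def bounded_clinear_diff[OF S_bcl])
  then have "A d = 0" using A_eq_0_iff_S_eq_0 by blast
  then have "cinner d d = 0" using dM mem_M_iff by blast
  then show "w1 = w2" by (simp add: d_def cinner_self_eq_zero)
qed

lemma clinear_Tdia: "clinear Tdia"
proof (rule clinearI)
  fix x y
  show "Tdia (x + y) = Tdia x + Tdia y"
    by (rule S_inj_on_M[OF Tdia_in_M csubspace_add[OF M_csubspace Tdia_in_M Tdia_in_M]])
       (simp add: S_Tdia bounded_clinear_add[OF S_bcl] bounded_clinear_add[OF Ts_bcl])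
next
  fix a x
  show "Tdia (scaleC a x) = scaleC a (Tdia x)"
    by (rule S_inj_on_M[OF Tdia_in_M csubspace_scaleC[OF M_csubspace Tdia_in_M]])
       (simp add: S_Tdia bounded_clinear_scaleC[OF S_bcl] bounded_clinear_scaleC[OF Ts_bcl])
qed

lemma Tdia_weakly_bounded: "\<exists>C. \<forall>x. cmod (cinner (Tdia x) y) \<le> C * norm x"
proof -
  have "P y \<in> closure (range S)" using P_in_M closure_range_S by simp
  then obtain u where u: "\<forall>k. u k \<in> range S" "u \<longlonglongrightarrow> P y" using closure_sequential[THEN iffD1] by blast
  have "\<forall>k. \<exists>w. u k = S w" using u(1) by blast
  then obtain z where z: "\<And>k. u k = S (z k)" by metis
  define phi where "phi k x = cinner x (S (T (z k)))" for k x
  have phi_eq: "phi k x = cinner (Tdia x) (u k)" for k x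
  proof -
    have "cinner (Tdia x) (u k) = cinner (S (Tdia x)) (z k)" by (simp add: z S_sa)
    also have "\<dots> = cinner (S x) (T (z k))" by (simp add: S_Tdia cinner_adjoint_left[OF T_bcl])
    also have "\<dots> = cinner x (S (T (z k)))" by (rule S_sa)
    finally show ?thesis by (simp add: phi_def)
  qed
  have lim: "(\<lambda>k. phi k x) \<longlonglongrightarrow> cinner (Tdia x) (P y)" for x
    unfolding phi_eq by (intro tendsto_cinner tendsto_const u(2))
  have "\<exists>C. \<forall>k\<in>UNIV. \<forall>x. norm (phi k x) \<le> C * norm x"
  proof (rule uniform_boundedness)
    show "bounded_linear (phi k)" for k unfolding phi_def[abs_def] by (rule bounded_linear_cinner_left)
    fix x
    have "Bseq (\<lambda>k. phi k x)" using lim[of x] by (intro convergent_imp_Bseq convergentI)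
    then obtain B where "\<forall>k. norm (phi k x) \<le> B" by (auto elim: BseqE)
    then show "\<exists>B. \<forall>k\<in>UNIV. norm (phi k x) \<le> B" by blast
  qed
  then obtain C where C: "\<And>k x. norm (phi k x) \<le> C * norm x" by blast
  have "cmod (cinner (Tdia x) y) \<le> C * norm x" for x
  proof -
    have "cinner (Tdia x) y = cinner (Tdia x) (P y)"
      using P_sa[of "Tdia x" y] P_id[OF Tdia_in_M] by simp
    moreover have "cmod (cinner (Tdia x) (P y)) \<le> C * norm x"
      using tendsto_norm[OF lim[of x]] C by (intro LIMSEQ_le_const2) auto
    ultimately show ?thesis by simp
  qed
  then show ?thesis by blast
qed

lemma bounded_clinear_Tdia: "bounded_clinear Tdia"
  using clinear_Tdia Tdia_weakly_bounded by (rule bounded_clinear_of_weakly_bounded)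

lemma diamond_eq_Tdia: "diamond A T = Tdia"
  unfolding diamond_def
proof (rule the_equality)
  show "bounded_clinear Tdia \<and> Ts \<circ> S = S \<circ> Tdia \<and> range Tdia \<subseteq> closure (range S)"
    using bounded_clinear_Tdia S_Tdia Tdia_in_M closure_range_S by (auto simp: fun_eq_iff)
  fix R assume R: "bounded_clinear R \<and> Ts \<circ> S = S \<circ> R \<and> range R \<subseteq> closure (range S)"
  show "R = Tdia"
  proof
    fix x
    have "R x \<in> M" using R closure_range_S by auto
    moreover have "S (R x) = S (Tdia x)" using R S_Tdia by (metis comp_apply)
    ultimately show "R x = Tdia x" using S_inj_on_M Tdia_in_M by blast
  qed
qed

lemma S_Tdia_pow: "S ((Tdia ^^ n) x) = (Ts ^^ n) (S x)"
  by (induct n) (auto simp: S_Tdia)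

lemma M_nz: "\<exists>x\<in>M. x \<noteq> 0"
proof -
  obtain x where "A x \<noteq> 0" using A_nz by auto
  moreover have "A x \<in> M" by (rule subsetD[OF closure_subset rangeI])
  ultimately show ?thesis by blast
qed

lemma op_on_T_eff: "op_on M T_eff"
  by (simp add: op_on_def T_eff_bcl T_eff_in_M)

end

sublocale semi_hilbertian \<subseteq> eff: subspace_op "closure (range A)" T_eff
  by unfold_locales (simp_all add: M_csubspace M_nz op_on_T_eff)

context semi_hilbertian
begin

lemma invertible_on_T_eff_of_A_invertible:
  assumes "A_invertible A (\<lambda>x. scaleC l x - T x)"
  shows "invertible_on M (\<lambda>x. scaleC l x - T_eff x)"
proof -
  define E where "E x = scaleC l x - T x" for x
  obtain R where RB: "R \<in> BAhalf A" and r1: "A \<circ> (\<lambda>x. scaleC l x - T x) \<circ> R = A"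
    and r2: "A \<circ> R \<circ> (\<lambda>x. scaleC l x - T x) = A"
    using assms unfolding A_invertible_def by blast
  have AER: "A (E (R x)) = A x" for x using r1 by (metis comp_apply E_def)
  have ARE: "A (R (E x)) = A x" for x using r2 by (metis comp_apply E_def)
  have Rb: "bounded_clinear R" using RB by (simp add: BAhalf_def)
  define R' where "R' x = P (R x)" for x
  have R'ops: "op_on M R'"
    unfolding op_on_def R'_def[abs_def] using bounded_clinear_compose[OF P_bcl Rb] P_in_M by blast
  show ?thesis
  proof (rule eff.invertible_onI[OF R'ops R'ops])
    fix x assume x: "x \<in> M"
    have "T_eff (R' x) = P (T (R x))" by (simp add: T_eff_def R'_def P_idem P_BAhalf_P[OF T_B])
    then have "scaleC l (R' x) - T_eff (R' x) = P (E (R x))"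
      by (simp add: R'_def E_def bounded_clinear_diff[OF P_bcl] bounded_clinear_scaleC[OF P_bcl])
    also have "\<dots> = x" using P_eq_if_A_eq[OF AER] P_id[OF x] by simp
    finally show "scaleC l (R' x) - T_eff (R' x) = x" .
  next
    fix x assume x: "x \<in> M"
    have "scaleC l x - T_eff x = P (E x)"
      by (simp add: T_eff_def E_def bounded_clinear_diff[OF P_bcl] bounded_clinear_scaleC[OF P_bcl] P_id[OF x])
    then have "R' (scaleC l x - T_eff x) = P (R (E x))" by (simp add: R'_def P_BAhalf_P[OF RB])
    also have "\<dots> = x" using P_eq_if_A_eq[OF ARE] P_id[OF x] by simp
    finally show "R' (scaleC l x - T_eff x) = x" .
  qed
qed

lemma spectrum_on_T_eff_subset_spectrumA: "spectrum_on M T_eff \<subseteq> spectrumA A T"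
  using invertible_on_T_eff_of_A_invertible by (auto simp: spectrum_on_def spectrumA_def)

lemma normA_eq: "normA A v = norm (S v)"
proof -
  have "cinner (A v) v = cinner (S v) (S v)" by (simp add: S_S[symmetric] S_sa)
  then show ?thesis by (simp add: normA_def cinner_self)
qed

lemma opnormA_Tdia_pow: "opnormA A (Tdia ^^ n) = opnorm_on M (T_eff ^^ n)"
proof -
  have Ts_pow: "op_on M (Ts ^^ n)"
    using bounded_clinear_funpow[OF Ts_bcl] Ts_pow_in_M by (simp add: op_on_def)
  have "{normA A ((Tdia ^^ n) x) | x. x \<in> M \<and> normA A x = 1}
      = {norm ((Ts ^^ n) z) | z. z \<in> S ` M \<and> norm z = 1}"
    by (auto simp: normA_eq S_Tdia_pow)
  then have "opnormA A (Tdia ^^ n) = Sup {norm ((Ts ^^ n) z) | z. z \<in> S ` M \<and> norm z = 1}"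
    by (simp add: opnormA_def)
  also have "\<dots> = opnorm_on M (Ts ^^ n)"
  proof (rule eff.opnorm_on_eq_Sup_dense[symmetric])
    show "bounded_clinear (Ts ^^ n)" by (rule bounded_clinear_funpow[OF Ts_bcl])
    show "S ` M \<subseteq> M" using S_in_M by blast
    show "M \<subseteq> closure (S ` M)" by (rule M_sub_closure_SM)
    show "scaleC c z \<in> S ` M" if "z \<in> S ` M" for c z
      using that csubspace_scaleC[OF M_csubspace] by (auto simp: bounded_clinear_scaleC[OF S_bcl, symmetric])
  qed
  also have "\<dots> = opnorm_on M (T_eff ^^ n)"
    by (rule eff.opnorm_on_adjoint_eq[OF eff.op_on_funpow[OF op_on_T_eff] Ts_pow cinner_T_eff_pow])
  finally show ?thesis .
qed

end

theorem mainTheorem4: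
  fixes A T :: "'a::chilbert_space \<Rightarrow> 'a"
  assumes "positive_op A" and "A \<noteq> (\<lambda>x. 0)"
    and "T \<in> BAhalf A"
  shows "spec_rad_on (closure (range A))
           (\<lambda>x. orth_proj (closure (range A)) (T (orth_proj (closure (range A)) x)))
           = spec_radA A (diamond A T)
       \<and> ereal (spec_radA A (diamond A T)) \<le> (SUP l\<in>spectrumA A T. ereal (cmod l))"
proof -
  interpret semi_hilbertian A T using assms by unfold_locales
  have "(\<lambda>n. opnormA A (diamond A T ^^ n) powr (1 / real n)) \<longlonglongrightarrow> spec_rad_on M T_eff"
    using eff.gelfand_formula by (simp add: diamond_eq_Tdia opnormA_Tdia_pow)
  then have "spec_radA A (diamond A T) = spec_rad_on M T_eff"
    unfolding spec_radA_def by (rule limI)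
  moreover have "ereal (spec_rad_on M T_eff) \<le> (SUP l\<in>spectrumA A T. ereal (cmod l))"
    by (rule eff.ereal_spec_rad_on_le_SUP[OF spectrum_on_T_eff_subset_spectrumA])
  ultimately show ?thesis by (simp add: T_eff_def[abs_def])
qed

end
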